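(* Assume the Frame condition (FC) holds at $\mathbf a_0\in(0,\infty)^n$ (in the interior of the domain of $\Phi$) with common value $\lambda=\partial_{a^i}\tilde g_i(\mathbf a_0)$, and assume $\lambda>0$. Set $\gamma^i_{jl}=\partial_{a^j}\partial_{a^l}\tilde g_i(\mathbf a_0)$, $q_i=\sqrt{\tilde g_i(\mathbf a_0)}$, and for $c\in\mathbb R$ $$\Gamma^i_{jl}=\frac{c}{\lambda^{3/2}}\frac{q_jq_l}{q_i}\gamma^i_{jl}.$$ Then for all $1\le i,j,l\le n$, $\Gamma^i_{jl}=\Gamma^i_{lj}=\Gamma^j_{il}$.
   Context: Multi-species zero-range setting: rates $g_i$ on $\mathbb Z_+^n$ satisfying (ND) $g_i(\mathbf k)=0\iff k^i=0$, (INV) $g_i(\mathbf k)/g_i(\mathbf k-e_j)=g_j(\mathbf k)/g_j(\mathbf k-e_i)$ and (ORI) $\liminf_{|\mathbf k|\to\infty}\mathbf g!(\mathbf k)^{1/|\mathbf k|}>0$, where $\mathbf g!(\mathbf k)$ is the product of rates along an increasing unit-step path from $\mathbf 0$ to $\mathbf k$. Invariant one-site law $\bar\nu_{\boldsymbol\varphi}(\mathbf k)=Z_{\boldsymbol\varphi}^{-1}\boldsymbol\varphi^{\mathbf k}/\mathbf g!(\mathbf k)$, reparametrized by its mean $\mathbf a$ as $\nu_{\mathbf a}$; $\tilde g_i(\mathbf a)=E_{\nu_{\mathbf a}}[g_i]$ equals the $i$-th fugacity. $\Gamma(\mathbf a)$ (not to be confused with the coefficients $\Gamma^i_{jl}$)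 is the covariance matrix of $\nu_{\mathbf a}$. (FC) at $\mathbf a_0$: $\partial_{a^i}\tilde g_i(\mathbf a_0)=\lambda$ for all $i$ and $\partial_{a^j}\tilde g_i(\mathbf a_0)=0$ for $i\neq j$. These $\Gamma^i_{jl}$ are the coupling constants of the canonical form $\partial_t\bar{\mathcal Y}^i=\frac12\Delta\bar{\mathcal Y}^i+\sum_{j,l}\Gamma^i_{jl}\nabla(\bar{\mathcal Y}^j\bar{\mathcal Y}^l)+\nabla\dot{\mathcal W}^i$ of the limiting coupled KPZ–Burgers equation. *)

theory Defs
  imports "HOL-Analysis.Analysis"
begin

text \<open>Species are indexed by a finite type 'n
 (so n = CARD('n)); particle configurations on one site are vectors k :: nat^'n;
 rates are g :: 'n => nat^'n => real, with g i k the rate of species i.\<close>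

definition unitv :: "'n::finite \<Rightarrow> nat^'n" where
  "unitv j = (\<chi> m. if m = j then 1 else 0)"

definition absk :: "nat^'n::finite \<Rightarrow> nat" where
  "absk k = (\<Sum>i\<in>UNIV. k $ i)"

text \<open>An increasing unit-step path from 0 to k, encoded by the list of species
 whose coordinate is incremented at each step.\<close>
definition is_path :: "'n::finite list \<Rightarrow> nat^'n \<Rightarrow> bool" where
  "is_path p k \<longleftrightarrow> (\<forall>i. count_list p i = k $ i)"

definition path_pos :: "'n::finite list \<Rightarrow> nat \<Rightarrow> nat^'n" where
  "path_pos p m = (\<chi> i. count_list (take m p) i)"

text \<open>g!(k): product of the rates along an (arbitrarily chosen) increasing path;
 under (INV) it does not depend on the path.\<close>
definition gfact :: "('n::finite \<Rightarrow> nat^'n \<Rightarrow> real) \<Rightarrow> nat^'n \<Rightarrow> real" where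
  "gfact g k = (let p = (SOME p. is_path p k) in
      \<Prod>m<length p. g (p ! m) (path_pos p (Suc m)))"

definition cond_ND :: "('n::finite \<Rightarrow> nat^'n \<Rightarrow> real) \<Rightarrow> bool" where
  "cond_ND g \<longleftrightarrow> (\<forall>i k. g i k = 0 \<longleftrightarrow> k $ i = 0)"

definition cond_INV :: "('n::finite \<Rightarrow> nat^'n \<Rightarrow> real) \<Rightarrow> bool" where
  "cond_INV g \<longleftrightarrow> (\<forall>i j k. i \<noteq> j \<and> k $ i > 0 \<and> k $ j > 0 \<longrightarrow>
       g i k / g i (k - unitv j) = g j k / g j (k - unitv i))"

text \<open>liminf_{|k|->oo} g!(k)^(1/|k|) > 0, written out.\<close>
definition cond_ORI :: "('n::finite \<Rightarrow> nat^'n \<Rightarrow> real) \<Rightarrow> bool" where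
  "cond_ORI g \<longleftrightarrow> (\<exists>c>0. \<exists>N. \<forall>k. absk k \<ge> N \<longrightarrow> gfact g k powr (1 / real (absk k)) \<ge> c)"

definition vpow :: "real^'n::finite \<Rightarrow> nat^'n \<Rightarrow> real" where
  "vpow \<phi> k = (\<Prod>i\<in>UNIV. (\<phi> $ i) ^ (k $ i))"

definition weight :: "('n::finite \<Rightarrow> nat^'n \<Rightarrow> real) \<Rightarrow> real^'n \<Rightarrow> nat^'n \<Rightarrow> real" where
  "weight g \<phi> k = vpow \<phi> k / gfact g k"

definition Zpart :: "('n::finite \<Rightarrow> nat^'n \<Rightarrow> real) \<Rightarrow> real^'n \<Rightarrow> real" where
  "Zpart g \<phi> = infsum (weight g \<phi>) UNIV"

definition fug_dom :: "('n::finite \<Rightarrow> nat^'n \<Rightarrow> real) \<Rightarrow> (real^'n) set" where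
  "fug_dom g = {\<phi>. (\<forall>i. \<phi> $ i \<ge> 0) \<and> weight g \<phi> summable_on UNIV}"

definition mean :: "('n::finite \<Rightarrow> nat^'n \<Rightarrow> real) \<Rightarrow> real^'n \<Rightarrow> real^'n" where
  "mean g \<phi> = (\<chi> i. infsum (\<lambda>k. real (k $ i) * weight g \<phi> k) UNIV / Zpart g \<phi>)"

text \<open>Domain of Phi (densities attained by fugacities in the interior of the
 fugacity domain) and the fugacity as a function of the density:
 gtilde g a = Phi(a), whose i-th component is tilde g_i(a).\<close>
definition dens_dom :: "('n::finite \<Rightarrow> nat^'n \<Rightarrow> real) \<Rightarrow> (real^'n) set" where
  "dens_dom g = mean g ` interior (fug_dom g)"

definition gtilde :: "('n::finite \<Rightarrow> nat^'n \<Rightarrow> real) \<Rightarrow> real^'n \<Rightarrow> real^'n" where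
  "gtilde g a = (SOME \<phi>. \<phi> \<in> interior (fug_dom g) \<and> mean g \<phi> = a)"

definition partial :: "'n::finite \<Rightarrow> (real^'n \<Rightarrow> real) \<Rightarrow> real^'n \<Rightarrow> real" where
  "partial j f a = deriv (\<lambda>t. f (a + t *\<^sub>R axis j 1)) 0"

end

theory Submission
  imports Defs "HOL-Homology.Invariance_of_Domain"
begin

(* The fugacity map gtilde inverts the mean map phi |-> E[k] of the exponential family
   nu_phi(k) ~ phi^k / g!(k).  Differentiating under the sum, the Jacobian of the mean map is
   Gamma(phi) diag(1/phi), Gamma the covariance; it is invertible because the covariance is
   positive definite, and the mean map is injective because phi |-> d . mean(phi) increases along
   log-linear paths in direction d.  Invariance of domain then makes gtilde a differentiable inverse
   with derivative (Gamma diag(1/phi))^-1.  Under the Frame condition this derivative is lam I, which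
   forces Gamma = diag(phi)/lam, and differentiating the inverse once more gives
   d_j d_l gtilde_i = -lam^3 d_j (Gamma_il / phi_l), where d_j Gamma_il = kappa_jil / phi_j for the
   (fully symmetric) third cumulant kappa.  With q = sqrt phi the coupling constants become
   -c lam^(3/2) (kappa_ijl / (q_i q_j q_l) - [i = j = l] / (lam q_i)), symmetric in all indices. *)

(* HOL-Homology imports HOL-Algebra, whose exact-sequence arrow clashes with the tendsto arrow. *)
no_notation exact_seq_arrow
  (\<open>(\<open>indent=3 notation=\<open>mixfix exact_seq\<close>\<close>_ / \<longlongrightarrow>\<index> _)\<close> [1000, 60])

section \<open>Analysis toolbox\<close>

lemma has_vector_derivative_iff_quotient:
  "(f has_vector_derivative f') (at x within S) \<longleftrightarrow>
     ((\<lambda>y. inverse (y - x) *\<^sub>R (f y - f x)) \<longlongrightarrow> f') (at x within S)"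
proof -
  have "((\<lambda>y. norm (f y - f x - (y - x) *\<^sub>R f') / norm (y - x)) \<longlongrightarrow> 0) (at x within S)
      \<longleftrightarrow> ((\<lambda>y. inverse (y - x) *\<^sub>R (f y - f x) - f') \<longlongrightarrow> 0) (at x within S)"
  proof (subst tendsto_norm_zero_iff[symmetric], rule Lim_cong_within)
    fix y assume "y \<noteq> x"
    then have "inverse (y - x) *\<^sub>R (f y - f x) - f' = inverse (y - x) *\<^sub>R (f y - f x - (y - x) *\<^sub>R f')"
      by (simp add: scaleR_diff_right)
    then show "norm (f y - f x - (y - x) *\<^sub>R f') / norm (y - x) = norm (inverse (y - x) *\<^sub>R (f y - f x) - f')"
      by (simp add: divide_inverse_commute)
  qed auto
  then show ?thesis
    by (simp add: has_vector_derivative_def has_derivative_iff_norm bounded_linear_scaleR_left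
        LIM_zero_iff)
qed

lemma has_derivative_vec_nth: "((\<lambda>x. x $ i) has_derivative (\<lambda>h. h $ i)) F"
  by (rule bounded_linear_imp_has_derivative) (rule bounded_linear_vec_nth)

lemma has_derivative_vec_lambda:
  fixes f :: "'a::real_normed_vector \<Rightarrow> real^'n::finite"
  assumes "\<And>i. ((\<lambda>x. f x $ i) has_derivative (\<lambda>h. f' h $ i)) (at a within S)"
  shows "(f has_derivative f') (at a within S)"
proof -
  have "\<forall>b\<in>Basis. ((\<lambda>x. f x \<bullet> b) has_derivative (\<lambda>h. f' h \<bullet> b)) (at a within S)"
  proof
    fix b :: "real^'n" assume "b \<in> Basis"
    then obtain i where "b = axis i 1" by (auto simp: Basis_vec_def)
    then show "((\<lambda>x. f x \<bullet> b) has_derivative (\<lambda>h. f' h \<bullet> b)) (at a within S)"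
      using assms[of i] by (simp add: inner_axis)
  qed
  then show ?thesis
    using has_derivative_componentwise_within by blast
qed

lemma has_field_derivative_vec_nth:
  assumes "(f has_vector_derivative f') F"
  shows "((\<lambda>s. f s $ i) has_field_derivative f' $ i) F"
proof -
  have "((\<lambda>s. f s $ i) has_derivative (\<lambda>s. (s *\<^sub>R f') $ i)) F"
    using bounded_linear.has_derivative[OF bounded_linear_vec_nth assms[unfolded has_vector_derivative_def]] .
  then show ?thesis
    by (simp add: has_field_derivative_def mult_commute_abs)
qed

lemma partial_eq_derivative_real:
  fixes f :: "real^'n::finite \<Rightarrow> real"
  assumes "(f has_derivative f') (at a)"
  shows "partial j f a = f' (axis j 1)"
proof -
  have "((\<lambda>t. a + t *\<^sub>R axis j 1) has_derivative (\<lambda>t. t *\<^sub>R axis j 1)) (at 0)"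
    by (auto intro!: derivative_eq_intros)
  moreover have "(f has_derivative f') (at (a + 0 *\<^sub>R axis j 1))"
    using assms by simp
  ultimately have "((\<lambda>t. f (a + t *\<^sub>R axis j 1)) has_derivative (\<lambda>t. f' (t *\<^sub>R axis j 1))) (at 0)"
    by (rule has_derivative_compose)
  moreover have "(\<lambda>t. f' (t *\<^sub>R axis j 1)) = (*) (f' (axis j 1))"
    using linear_cmul[OF has_derivative_linear[OF assms]] by (simp add: fun_eq_iff mult.commute)
  ultimately show ?thesis
    unfolding partial_def by (intro DERIV_imp_deriv) (simp add: has_field_derivative_def)
qed

lemma partial_eq_derivative:
  fixes F :: "real^'n::finite \<Rightarrow> real^'m::finite"
  assumes "(F has_derivative F') (at a)"
  shows "partial j (\<lambda>x. F x $ i) a = F' (axis j 1) $ i"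
  using partial_eq_derivative_real[OF bounded_linear.has_derivative[OF bounded_linear_vec_nth assms]]
  by simp

lemma has_derivative_scaleR_of_partials:
  fixes F :: "real^'n::finite \<Rightarrow> real^'n"
  assumes F: "(F has_derivative F') (at a)"
    and partials: "\<And>i j. partial j (\<lambda>x. F x $ i) a = (if i = j then lam else 0)"
  shows "(F has_derivative (\<lambda>z. lam *\<^sub>R z)) (at a)"
proof -
  have "F' z = lam *\<^sub>R z" for z
  proof -
    have "F' z = matrix F' *v z"
      using fun_cong[OF matrix_vector_mul(2)[OF has_derivative_linear[OF F]], of z] by simp
    also have "\<dots> = lam *\<^sub>R z"
    proof -
      have e: "F' (axis j 1) $ i = (if i = j then lam else 0)" for i j
        using partials[of j i] partial_eq_derivative[OF F, of j i] by simp
      have "(\<Sum>j\<in>UNIV. F' (axis j 1) $ i * z $ j) = (\<Sum>j\<in>UNIV. if i = j then lam * z $ j else 0)" for i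
        by (intro sum.cong) (auto simp: e)
      then show ?thesis
        by (simp add: vec_eq_iff matrix_vector_mult_def matrix_def)
    qed
    finally show ?thesis .
  qed
  then have "F' = (\<lambda>z. lam *\<^sub>R z)" by (rule ext)
  then show ?thesis using F by simp
qed

lemma sum_axis_scaleR: "(\<Sum>m\<in>UNIV. F m * (c *\<^sub>R axis j (1::real)) $ m) = F (j::'n::finite) * c"
proof -
  have "(\<Sum>m\<in>UNIV. F m * (c *\<^sub>R axis j (1::real)) $ m) = (\<Sum>m\<in>UNIV. if m = j then F m * c else 0)"
    by (intro sum.cong) (auto simp: axis_def)
  then show ?thesis by simp
qed

lemma abs_sum_coordinates_le:
  fixes h :: "real^'n::finite"
  shows "\<bar>\<Sum>m\<in>UNIV. h $ m * a m\<bar> \<le> norm h * (\<Sum>m\<in>UNIV. \<bar>a m\<bar>)"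
proof -
  have "\<bar>\<Sum>m\<in>UNIV. h $ m * a m\<bar> \<le> (\<Sum>m\<in>UNIV. \<bar>h $ m\<bar> * \<bar>a m\<bar>)"
    by (rule order_trans[OF sum_abs]) (simp add: abs_mult)
  also have "\<dots> \<le> (\<Sum>m\<in>UNIV. norm h * \<bar>a m\<bar>)"
    by (intro sum_mono mult_right_mono component_le_norm_cart abs_ge_zero)
  finally show ?thesis by (simp add: sum_distrib_left)
qed

lemma has_sum_sum_fun:
  fixes f :: "'i \<Rightarrow> 'a \<Rightarrow> 'b::topological_comm_monoid_add"
  assumes "finite I" "\<And>i. i \<in> I \<Longrightarrow> (f i has_sum s i) A"
  shows "((\<lambda>x. \<Sum>i\<in>I. f i x) has_sum (\<Sum>i\<in>I. s i)) A"
  using assms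
proof (induction I rule: finite_induct)
  case (insert i I)
  then have "((\<lambda>x. f i x + (\<Sum>i\<in>I. f i x)) has_sum (s i + sum s I)) A"
    by (intro has_sum_add) auto
  with insert show ?case by simp
qed simp

lemma infsum_sum_fun:
  fixes f :: "'i \<Rightarrow> 'a \<Rightarrow> real"
  assumes "finite I" "\<And>i. i \<in> I \<Longrightarrow> f i summable_on A"
  shows "(\<Sum>\<^sub>\<infinity>x\<in>A. \<Sum>i\<in>I. f i x) = (\<Sum>i\<in>I. \<Sum>\<^sub>\<infinity>x\<in>A. f i x)"
  using has_sum_sum_fun[OF assms(1), where f=f and s="\<lambda>i. infsum (f i) A" and A=A] assms(2)
  by (simp add: has_sum_iff)

lemma summable_on_abs_dominated:
  fixes f :: "'a \<Rightarrow> real"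
  assumes "W summable_on A" "\<And>x. x \<in> A \<Longrightarrow> \<bar>f x\<bar> \<le> W x"
  shows "f summable_on A"
proof -
  have "(\<lambda>x. \<bar>f x\<bar>) summable_on A"
    by (rule summable_on_comparison_test[OF assms(1)]) (simp_all add: assms(2))
  then have "(\<lambda>x. norm (f x)) summable_on A"
    by (simp only: real_norm_def)
  then show ?thesis
    by (rule abs_summable_summable)
qed

lemma poly_times_power_bounded:
  fixes c :: real
  assumes "0 < c" "c < 1"
  obtains C where "\<And>n. (1 + real n) ^ p * c ^ n \<le> C"
proof -
  define e where "e = root (Suc p) c"
  have e: "0 < e" "e < 1" "e ^ Suc p = c"
    using assms by (auto simp: e_def real_root_pow_pos simp del: power_Suc)
  have "(\<lambda>n. e ^ n + real n * e ^ n) \<longlonglongrightarrow> 0 + 0"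
    using e by (intro tendsto_add LIMSEQ_power_zero powser_times_n_limit_0) auto
  then have "Bseq (\<lambda>n. (1 + real n) * e ^ n)"
    by (auto simp: algebra_simps intro: convergent_imp_Bseq convergentI)
  then obtain K where K: "\<And>n. norm ((1 + real n) * e ^ n) \<le> K"
    unfolding Bseq_def by blast
  have "(1 + real n) ^ p * c ^ n \<le> K ^ p" for n
  proof -
    have "(1 + real n) ^ p * c ^ n = ((1 + real n) * e ^ n) ^ p * e ^ n"
      by (simp add: e(3)[symmetric] power_mult_distrib power_mult[symmetric] mult.commute
            power_add[symmetric] mult.assoc)
    also have "\<dots> \<le> ((1 + real n) * e ^ n) ^ p"
      using e by (intro mult_left_le) (auto simp: power_le_one)
    also have "\<dots> \<le> K ^ p"
      using K[of n] e by (intro power_mono) auto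
    finally show ?thesis .
  qed
  then show ?thesis by (rule that)
qed

lemma has_derivative_infsum:
  fixes f :: "'k::countable \<Rightarrow> 'a::real_normed_vector \<Rightarrow> real"
  assumes S: "open S" "convex S" "x \<in> S"
    and f': "\<And>k y. y \<in> S \<Longrightarrow> (f k has_derivative f' k y) (at y)"
    and dominated: "\<And>k y h. y \<in> S \<Longrightarrow> \<bar>f' k y h\<bar> \<le> W k * norm h"
    and W: "W summable_on UNIV"
    and summable: "\<And>y. y \<in> S \<Longrightarrow> (\<lambda>k. f k y) summable_on UNIV"
  shows "((\<lambda>y. \<Sum>\<^sub>\<infinity>k. f k y) has_derivative (\<lambda>h. \<Sum>\<^sub>\<infinity>k. f' k x h)) (at x)"
proof -
  define F :: "nat \<Rightarrow> 'k set" where "F N = {k. to_nat k < N}" for N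
  have finite_F: "finite (F N)" for N
    unfolding F_def using finite_vimageI[of "{..<N}" to_nat] by (simp add: vimage_def)
  have partial_sums: "(\<lambda>N. sum h (F N)) \<longlonglongrightarrow> (\<Sum>\<^sub>\<infinity>k. h k)"
    if "h summable_on UNIV" for h :: "'k \<Rightarrow> real"
  proof -
    have "filterlim F (finite_subsets_at_top UNIV) sequentially"
      unfolding filterlim_finite_subsets_at_top
    proof (intro allI impI)
      fix X :: "'k set" assume "finite X \<and> X \<subseteq> UNIV"
      then obtain N where "\<forall>k\<in>X. to_nat k < N"
        using finite_nat_set_iff_bounded[of "to_nat ` X"] by auto
      then show "\<forall>\<^sub>F M in sequentially. finite (F M) \<and> X \<subseteq> F M \<and> F M \<subseteq> UNIV"
        by (intro eventually_sequentiallyI[of N]) (use finite_F in \<open>auto simp: F_def\<close>)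
    qed
    moreover have "(sum h \<longlongrightarrow> (\<Sum>\<^sub>\<infinity>k. h k)) (finite_subsets_at_top UNIV)"
      using that by (simp add: summable_iff_has_sum_infsum has_sum_def)
    ultimately show ?thesis by (rule filterlim_compose[of "sum h", rotated])
  qed
  have tails: "(\<Sum>\<^sub>\<infinity>k\<in>UNIV - F N. h k) = (\<Sum>\<^sub>\<infinity>k. h k) - sum h (F N)"
    if "h summable_on UNIV" for h :: "'k \<Rightarrow> real" and N
    using infsum_Diff[OF that, of "F N"] finite_F by (simp add: infsum_finite)
  have W_tail: "(\<lambda>N. \<Sum>\<^sub>\<infinity>k\<in>UNIV - F N. W k) \<longlonglongrightarrow> 0"
    using tendsto_diff[OF tendsto_const[of "\<Sum>\<^sub>\<infinity>k. W k"] partial_sums[OF W]]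
    by (simp add: tails[OF W])
  have f'_abs_summable: "(\<lambda>k. \<bar>f' k y h\<bar>) summable_on A" if "y \<in> S" for y h A
  proof -
    have "(\<lambda>k. \<bar>f' k y h\<bar>) summable_on UNIV"
      by (rule summable_on_comparison_test[OF summable_on_cmult_left[OF W, of "norm h"]])
        (use dominated[OF that] in auto)
    then show ?thesis by (rule summable_on_subset_banach) auto
  qed
  have f'_summable: "(\<lambda>k. f' k y h) summable_on A" if "y \<in> S" for y h A
  proof (rule abs_summable_summable)
    show "(\<lambda>k. norm (f' k y h)) summable_on A"
      using f'_abs_summable[OF that] by (simp only: real_norm_def)
  qed
  have uniform: "\<forall>\<^sub>F N in sequentially. \<forall>y\<in>S. \<forall>h.
      norm ((\<Sum>k\<in>F N. f' k y h) - (\<Sum>\<^sub>\<infinity>k. f' k y h)) \<le> e * norm h" if "e > 0" for e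
    using order_tendstoD(2)[OF W_tail that]
  proof eventually_elim
    case (elim N)
    show ?case
    proof (intro ballI allI)
      fix y h assume y: "y \<in> S"
      have "norm ((\<Sum>k\<in>F N. f' k y h) - (\<Sum>\<^sub>\<infinity>k. f' k y h)) = \<bar>\<Sum>\<^sub>\<infinity>k\<in>UNIV - F N. f' k y h\<bar>"
        using tails[OF f'_summable[OF y]] by simp
      also have "\<dots> \<le> (\<Sum>\<^sub>\<infinity>k\<in>UNIV - F N. \<bar>f' k y h\<bar>)"
        using norm_infsum_bound[of "\<lambda>k. f' k y h" "UNIV - F N"] f'_abs_summable[OF y] by simp
      also have "\<dots> \<le> (\<Sum>\<^sub>\<infinity>k\<in>UNIV - F N. W k * norm h)"
        using f'_abs_summable[OF y] summable_on_subset_banach[OF summable_on_cmult_left[OF W]]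
        by (intro infsum_mono dominated[OF y]) auto
      also have "\<dots> = (\<Sum>\<^sub>\<infinity>k\<in>UNIV - F N. W k) * norm h"
        by (rule infsum_cmult_left') 
      also have "\<dots> \<le> e * norm h"
        using elim by (intro mult_right_mono) auto
      finally show "norm ((\<Sum>k\<in>F N. f' k y h) - (\<Sum>\<^sub>\<infinity>k. f' k y h)) \<le> e * norm h" .
    qed
  qed
  have derivatives: "((\<lambda>y. \<Sum>k\<in>F N. f k y) has_derivative (\<lambda>h. \<Sum>k\<in>F N. f' k y h))
      (at y within S)" if "y \<in> S" for N y
    by (rule has_derivative_sum, rule has_derivative_at_withinI, rule f'[OF that])
  have "\<exists>G. \<forall>y\<in>S. (\<lambda>N. \<Sum>k\<in>F N. f k y) \<longlonglongrightarrow> G y \<and>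
      (G has_derivative (\<lambda>h. \<Sum>\<^sub>\<infinity>k. f' k y h)) (at y within S)"
    by (rule has_derivative_sequence[OF S(2) derivatives uniform S(3) partial_sums[OF summable[OF S(3)]]])
  then obtain G where G: "\<And>y. y \<in> S \<Longrightarrow> (\<lambda>N. \<Sum>k\<in>F N. f k y) \<longlonglongrightarrow> G y \<and>
      (G has_derivative (\<lambda>h. \<Sum>\<^sub>\<infinity>k. f' k y h)) (at y within S)"
    by blast
  have G_eq: "G y = (\<Sum>\<^sub>\<infinity>k. f k y)" if "y \<in> S" for y
    using G[OF that] partial_sums[OF summable[OF that]] LIMSEQ_unique by blast
  have "(G has_derivative (\<lambda>h. \<Sum>\<^sub>\<infinity>k. f' k x h)) (at x)"
    using G[OF S(3)] at_within_open[OF S(3,1)] by simp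
  then show ?thesis
    by (rule has_derivative_transform_within_open[OF _ S(1,3)]) (rule G_eq)
qed

lemma has_vector_derivative_inverse_family:
  fixes L K :: "real \<Rightarrow> 'a::{real_normed_vector, perfect_space} \<Rightarrow> 'a"
  assumes K0: "bounded_linear (K 0)" "\<And>z. L 0 (K 0 z) = z"
    and K: "\<forall>\<^sub>F s in at 0. bounded_linear (K s) \<and> (\<forall>z. K s (L s z) = z)"
    and L: "\<And>s. bounded_linear (L s)"
    and L_cont: "((\<lambda>s. onorm (\<lambda>z. L s z - L 0 z)) \<longlongrightarrow> 0) (at 0)"
    and L_diff: "((\<lambda>s. L s (K 0 w)) has_vector_derivative u) (at 0)"
  shows "((\<lambda>s. K s w) has_vector_derivative - K 0 u) (at 0)"
proof -
  define E where "E s = onorm (\<lambda>z. L s z - L 0 z)" for s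
  define B where "B = onorm (K 0)"
  have E: "norm (L s z - L 0 z) \<le> E s * norm z" for s z
    unfolding E_def by (intro onorm bounded_linear_sub L)
  have E_nonneg: "0 \<le> E s" for s
    unfolding E_def by (intro onorm_pos_le bounded_linear_sub L)
  have B: "norm (K 0 z) \<le> B * norm z" "0 \<le> B" for z
    unfolding B_def using K0(1) by (auto intro: onorm onorm_pos_le)
  have "((\<lambda>s. E s * B) \<longlongrightarrow> 0 * B) (at 0)"
    using L_cont unfolding E_def by (intro tendsto_mult tendsto_const)
  then have small: "\<forall>\<^sub>F s in at 0. E s * B < 1/2"
    by (intro order_tendstoD(2)) auto
  \<comment> \<open>The resolvent identity \<open>K s - K 0 = K s (L 0 - L s) K 0\<close> and a uniform bound on \<open>K s\<close>.\<close>
  have resolvent: "\<forall>\<^sub>F s in at 0. bounded_linear (K s) \<and> onorm (K s) \<le> 2 * B \<and>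
      (\<forall>z. K s z - K 0 z = - K s (L s (K 0 z) - L 0 (K 0 z)))"
    using K small
  proof eventually_elim
    case (elim s)
    then have lin: "bounded_linear (K s)" and inv: "\<And>z. K s (L s z) = z" by auto
    have identity: "K s z - K 0 z = - K s (L s (K 0 z) - L 0 (K 0 z))" for z
      using inv[of "K 0 z"] K0(2)[of z] by (simp add: linear_diff[OF bounded_linear.linear[OF lin]])
    have "norm (K s z) \<le> (B + onorm (K s) * (E s * B)) * norm z" for z
    proof -
      have "K s z = K 0 z - K s (L s (K 0 z) - L 0 (K 0 z))"
        using identity[of z] by (simp add: algebra_simps)
      then have "norm (K s z) \<le> norm (K 0 z) + norm (K s (L s (K 0 z) - L 0 (K 0 z)))"
        by (metis norm_triangle_ineq4)
      also have "\<dots> \<le> B * norm z + onorm (K s) * (E s * (B * norm z))"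
      proof (rule add_mono)
        have "norm (L s (K 0 z) - L 0 (K 0 z)) \<le> E s * (B * norm z)"
          using E[of s "K 0 z"] mult_left_mono[OF B(1) E_nonneg] by (rule order_trans)
        then show "norm (K s (L s (K 0 z) - L 0 (K 0 z))) \<le> onorm (K s) * (E s * (B * norm z))"
          using onorm[OF lin] mult_left_mono[OF _ onorm_pos_le[OF lin]] order_trans by blast
      qed (rule B(1))
      finally show ?thesis by (simp add: algebra_simps)
    qed
    then have "onorm (K s) \<le> B + onorm (K s) * (E s * B)"
      by (rule onorm_le)
    moreover have "onorm (K s) * (E s * B) \<le> onorm (K s) * (1/2)"
      using elim onorm_pos_le[OF lin] by (intro mult_left_mono) auto
    ultimately show ?case using lin identity by auto
  qed
  define v where "v = K 0 w"
  define q where "q s = inverse s *\<^sub>R (L s v - L 0 v)" for s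
  have q: "(q \<longlongrightarrow> u) (at 0)"
    using L_diff unfolding has_vector_derivative_iff_quotient q_def v_def by simp
  have bound: "\<forall>\<^sub>F s in at 0. norm (inverse s *\<^sub>R (K s w - K 0 w) - - K 0 u)
      \<le> 2 * B * (E s * (B * norm u)) + 2 * B * norm (q s - u)"
    using resolvent eventually_neq_at_within[of 0 0 UNIV]
  proof eventually_elim
    case (elim s)
    then have lin: "bounded_linear (K s)" and K_bound: "onorm (K s) \<le> 2 * B"
      and identity: "\<And>z. K s z - K 0 z = - K s (L s (K 0 z) - L 0 (K 0 z))"
      and "s \<noteq> 0" by simp_all
    note K_linear = bounded_linear.linear[OF lin]
    have nK: "norm (K s z) \<le> 2 * B * norm z" for z
      using onorm[OF lin, of z] mult_right_mono[OF K_bound norm_ge_zero] by (rule order_trans)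
    have "K s w - K 0 w = - K s (s *\<^sub>R q s)"
      using identity[of w] \<open>s \<noteq> 0\<close> by (simp add: q_def v_def)
    then have "inverse s *\<^sub>R (K s w - K 0 w) = - K s (q s)"
      using \<open>s \<noteq> 0\<close> by (simp add: linear_cmul[OF K_linear])
    then have "inverse s *\<^sub>R (K s w - K 0 w) - - K 0 u = - (K s u - K 0 u) - K s (q s - u)"
      by (simp add: linear_diff[OF K_linear])
    also have "norm \<dots> \<le> norm (- (K s u - K 0 u)) + norm (K s (q s - u))"
      by (rule norm_triangle_ineq4)
    also have "\<dots> = norm (K s (L s (K 0 u) - L 0 (K 0 u))) + norm (K s (q s - u))"
      by (simp only: norm_minus_cancel identity)
    also have "\<dots> \<le> 2 * B * norm (L s (K 0 u) - L 0 (K 0 u)) + 2 * B * norm (q s - u)"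
      by (intro add_mono nK)
    also have "\<dots> \<le> 2 * B * (E s * (B * norm u)) + 2 * B * norm (q s - u)"
      using E[of s "K 0 u"] B mult_left_mono[OF B(1) E_nonneg]
      by (intro add_mono mult_left_mono) (auto intro: order_trans)
    finally show ?case .
  qed
  have "((\<lambda>s. 2 * B * (E s * (B * norm u)) + 2 * B * norm (q s - u)) \<longlongrightarrow>
      2 * B * (0 * (B * norm u)) + 2 * B * norm (u - u)) (at 0)"
    using L_cont q unfolding E_def by (intro tendsto_intros)
  then have "((\<lambda>s. inverse s *\<^sub>R (K s w - K 0 w) - - K 0 u) \<longlongrightarrow> 0) (at 0)"
    by (intro Lim_null_comparison[OF bound]) simp
  then have "((\<lambda>s. inverse s *\<^sub>R (K s w - K 0 w)) \<longlongrightarrow> - K 0 u) (at 0)"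
    by (rule LIM_zero_cancel)
  then show ?thesis
    unfolding has_vector_derivative_iff_quotient diff_zero .
qed

lemma tendsto_onorm_matrix_vector_mult:
  fixes A :: "'b \<Rightarrow> real^'n::finite^'m::finite"
  assumes "(A \<longlongrightarrow> A0) F"
  shows "((\<lambda>s. onorm (\<lambda>z. A s *v z - A0 *v z)) \<longlongrightarrow> 0) F"
proof (rule tendsto_sandwich[of "\<lambda>_. 0"])
  show "\<forall>\<^sub>F s in F. 0 \<le> onorm (\<lambda>z. A s *v z - A0 *v z)"
    by (simp add: onorm_pos_le bounded_linear_sub)
  have "((\<lambda>s. \<Sum>i\<in>UNIV. \<Sum>j\<in>UNIV. \<bar>A s $ i $ j - A0 $ i $ j\<bar>) \<longlongrightarrow>
      (\<Sum>i\<in>UNIV. \<Sum>j\<in>UNIV. \<bar>A0 $ i $ j - A0 $ i $ j\<bar>)) F"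
    using assms by (intro tendsto_intros)
  then show "((\<lambda>s. \<Sum>i\<in>UNIV. \<Sum>j\<in>UNIV. \<bar>A s $ i $ j - A0 $ i $ j\<bar>) \<longlongrightarrow> 0) F"
    by simp
  show "\<forall>\<^sub>F s in F. onorm (\<lambda>z. A s *v z - A0 *v z) \<le> (\<Sum>i\<in>UNIV. \<Sum>j\<in>UNIV. \<bar>A s $ i $ j - A0 $ i $ j\<bar>)"
  proof (intro always_eventually allI)
    fix s
    have "(\<lambda>z. A s *v z - A0 *v z) = (*v) (A s - A0)"
      by (simp add: fun_eq_iff matrix_vector_mult_diff_rdistrib)
    then show "onorm (\<lambda>z. A s *v z - A0 *v z) \<le> (\<Sum>i\<in>UNIV. \<Sum>j\<in>UNIV. \<bar>A s $ i $ j - A0 $ i $ j\<bar>)"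
      using onorm_le_matrix_component_sum[of "A s - A0"] by simp
  qed
qed auto

section \<open>Weights, moments and cumulants\<close>

lemma vpow_scaleR: "vpow (r *\<^sub>R \<phi>) k = r ^ absk k * vpow \<phi> k"
  unfolding vpow_def absk_def by (simp add: power_mult_distrib prod.distrib power_sum)

lemma weight_scaleR: "weight g (r *\<^sub>R \<phi>) k = r ^ absk k * weight g \<phi> k"
  unfolding weight_def vpow_scaleR by simp

lemma coordinate_le_absk: "k $ i \<le> absk k"
  unfolding absk_def by (rule member_le_sum) auto

lemma has_derivative_vpow:
  fixes \<phi> :: "real^'n::finite"
  assumes "\<forall>i. 0 < \<phi> $ i"
  shows "((\<lambda>\<psi>. vpow \<psi> k) has_derivative (\<lambda>h. \<Sum>i\<in>UNIV. h $ i * real (k $ i) * vpow \<phi> k / \<phi> $ i)) (at \<phi>)"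
proof -
  have "((\<lambda>\<psi>. (\<psi> $ i) ^ (k $ i)) has_derivative (\<lambda>h. real (k $ i) * (\<phi> $ i) ^ (k $ i - 1) * h $ i)) (at \<phi>)"
    for i
    by (auto intro!: derivative_eq_intros has_derivative_vec_nth simp: algebra_simps)
  then have "((\<lambda>\<psi>. vpow \<psi> k) has_derivative (\<lambda>h. \<Sum>i\<in>UNIV.
      real (k $ i) * (\<phi> $ i) ^ (k $ i - 1) * h $ i * (\<Prod>j\<in>UNIV - {i}. (\<phi> $ j) ^ (k $ j)))) (at \<phi>)"
    unfolding vpow_def by (rule has_derivative_prod)
  moreover have "real (k $ i) * (\<phi> $ i) ^ (k $ i - 1) * h $ i * (\<Prod>j\<in>UNIV - {i}. (\<phi> $ j) ^ (k $ j))
      = h $ i * real (k $ i) * vpow \<phi> k / \<phi> $ i" for i h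
  proof (cases "k $ i = 0")
    case False
    have "vpow \<phi> k = (\<phi> $ i) ^ (k $ i) * (\<Prod>j\<in>UNIV - {i}. (\<phi> $ j) ^ (k $ j))"
      unfolding vpow_def by (simp add: prod.remove)
    moreover have "(\<phi> $ i) ^ (k $ i) = \<phi> $ i * (\<phi> $ i) ^ (k $ i - 1)"
      using False by (metis power_eq_if)
    ultimately show ?thesis
      using assms[rule_format, of i] by (simp add: field_simps)
  qed simp
  ultimately show ?thesis by simp
qed

lemma has_derivative_weight:
  fixes \<psi> :: "real^'n::finite"
  assumes "\<forall>i. 0 < \<psi> $ i"
  shows "((\<lambda>\<psi>. weight g \<psi> k) has_derivative
           (\<lambda>h. \<Sum>m\<in>UNIV. h $ m * real (k $ m) * weight g \<psi> k / \<psi> $ m)) (at \<psi>)"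
proof -
  have "((\<lambda>\<psi>. inverse (gfact g k) * vpow \<psi> k) has_derivative
      (\<lambda>h. inverse (gfact g k) * (\<Sum>m\<in>UNIV. h $ m * real (k $ m) * vpow \<psi> k / \<psi> $ m))) (at \<psi>)"
    by (rule has_derivative_mult_right[OF has_derivative_vpow[OF assms]])
  then show ?thesis
    by (simp add: weight_def sum_distrib_left field_simps)
qed

lemma vpow_eq_exp:
  assumes "\<forall>i. 0 < \<phi> $ i"
  shows "vpow \<phi> k = exp (\<Sum>i\<in>UNIV. real (k $ i) * ln (\<phi> $ i))"
proof -
  have "(\<phi> $ i) ^ (k $ i) = exp (real (k $ i) * ln (\<phi> $ i))" for i
    using assms by (simp add: exp_of_nat_mult)
  then show ?thesis
    by (simp add: vpow_def exp_sum)
qed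

definition log_path :: "real^'n::finite \<Rightarrow> real^'n \<Rightarrow> real \<Rightarrow> real^'n" where
  "log_path \<phi> \<psi> t = (\<chi> i. exp ((1 - t) * ln (\<phi> $ i) + t * ln (\<psi> $ i)))"

lemma log_path_pos: "0 < log_path \<phi> \<psi> t $ i"
  by (simp add: log_path_def)

lemma log_path_0: "\<forall>i. 0 < \<phi> $ i \<Longrightarrow> log_path \<phi> \<psi> 0 = \<phi>"
  by (simp add: log_path_def vec_eq_iff)

lemma log_path_1: "\<forall>i. 0 < \<psi> $ i \<Longrightarrow> log_path \<phi> \<psi> 1 = \<psi>"
  by (simp add: log_path_def vec_eq_iff)

lemma log_path_scaleR:
  assumes "0 < r" "\<forall>i. 0 < \<phi> $ i" "\<forall>i. 0 < \<psi> $ i"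
  shows "log_path (r *\<^sub>R \<phi>) (r *\<^sub>R \<psi>) t = r *\<^sub>R log_path \<phi> \<psi> t"
proof -
  have "exp ((1 - t) * ln (r * \<phi> $ i) + t * ln (r * \<psi> $ i))
      = exp (ln r + ((1 - t) * ln (\<phi> $ i) + t * ln (\<psi> $ i)))" for i
    using assms(1) assms(2,3)[rule_format, of i] by (simp add: ln_mult algebra_simps)
  then show ?thesis
    using assms(1) by (simp add: log_path_def vec_eq_iff exp_add)
qed

lemma has_vector_derivative_log_path:
  "(log_path \<phi> \<psi> has_vector_derivative (\<chi> i. log_path \<phi> \<psi> t $ i * (ln (\<psi> $ i) - ln (\<phi> $ i)))) (at t)"
  unfolding has_vector_derivative_def
proof (rule has_derivative_vec_lambda)
  fix i
  have "((\<lambda>t. exp ((1 - t) * ln (\<phi> $ i) + t * ln (\<psi> $ i))) has_real_derivative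
      exp ((1 - t) * ln (\<phi> $ i) + t * ln (\<psi> $ i)) * (ln (\<psi> $ i) - ln (\<phi> $ i))) (at t)"
    by (auto intro!: derivative_eq_intros)
  then show "((\<lambda>t. log_path \<phi> \<psi> t $ i) has_derivative (\<lambda>s. (s *\<^sub>R (\<chi> i. log_path \<phi> \<psi> t $ i
      * (ln (\<psi> $ i) - ln (\<phi> $ i)))) $ i)) (at t)"
    by (simp add: log_path_def has_field_derivative_def mult_commute_abs)
qed

lemma vpow_log_path_le:
  assumes \<phi>: "\<forall>i. 0 < \<phi> $ i" and \<psi>: "\<forall>i. 0 < \<psi> $ i" and t: "0 \<le> t" "t \<le> 1"
  shows "vpow (log_path \<phi> \<psi> t) k \<le> (1 - t) * vpow \<phi> k + t * vpow \<psi> k"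
proof -
  define a b where "a = (\<Sum>i\<in>UNIV. real (k $ i) * ln (\<phi> $ i))" and "b = (\<Sum>i\<in>UNIV. real (k $ i) * ln (\<psi> $ i))"
  have "(\<Sum>i\<in>UNIV. real (k $ i) * ln (log_path \<phi> \<psi> t $ i)) = (1 - t) * a + t * b"
    by (simp add: log_path_def a_def b_def sum_distrib_left sum.distrib[symmetric] algebra_simps)
  then have "vpow (log_path \<phi> \<psi> t) k = exp ((1 - t) *\<^sub>R a + t *\<^sub>R b)"
    by (simp add: vpow_eq_exp log_path_pos)
  also have "\<dots> \<le> (1 - t) * exp a + t * exp b"
    using t by (intro convex_onD[OF exp_convex]) auto
  finally show ?thesis
    using vpow_eq_exp[OF \<phi>] vpow_eq_exp[OF \<psi>] by (simp add: a_def b_def)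
qed

definition poly_growth :: "(nat^'n::finite \<Rightarrow> real) \<Rightarrow> bool" where
  "poly_growth f \<longleftrightarrow> (\<exists>B p. \<forall>k. \<bar>f k\<bar> \<le> B * (1 + real (absk k)) ^ p)"

lemma poly_growth_const: "poly_growth (\<lambda>k. c)"
  unfolding poly_growth_def by (rule exI[of _ "\<bar>c\<bar>"], rule exI[of _ 0]) simp

lemma poly_growth_coordinate: "poly_growth (\<lambda>k. real (k $ i))"
proof -
  have "\<bar>real (k $ i)\<bar> \<le> 1 * (1 + real (absk k)) ^ 1" for k
    using coordinate_le_absk[of k i] by simp
  then show ?thesis unfolding poly_growth_def by blast
qed

lemma poly_growth_bound:
  assumes "poly_growth f"
  shows "\<exists>B p. 0 \<le> B \<and> (\<forall>k q. p \<le> q \<longrightarrow> \<bar>f k\<bar> \<le> B * (1 + real (absk k)) ^ q)"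
proof -
  obtain B p where f: "\<And>k. \<bar>f k\<bar> \<le> B * (1 + real (absk k)) ^ p"
    using assms unfolding poly_growth_def by blast
  have "0 \<le> B"
    using f[of 0] by (simp add: absk_def order_trans[OF abs_ge_zero])
  moreover have "\<bar>f k\<bar> \<le> B * (1 + real (absk k)) ^ q" if "p \<le> q" for k q
    using f[of k] mult_left_mono[OF power_increasing[OF that] \<open>0 \<le> B\<close>, of "1 + real (absk k)"]
    by simp
  ultimately show ?thesis by blast
qed

lemma poly_growth_add:
  assumes "poly_growth f" "poly_growth h"
  shows "poly_growth (\<lambda>k. f k + h k)"
proof -
  obtain B p where f: "\<And>k q. p \<le> q \<Longrightarrow> \<bar>f k\<bar> \<le> B * (1 + real (absk k)) ^ q"
    using poly_growth_bound[OF assms(1)] by blast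
  obtain C q where h: "\<And>k q'. q \<le> q' \<Longrightarrow> \<bar>h k\<bar> \<le> C * (1 + real (absk k)) ^ q'"
    using poly_growth_bound[OF assms(2)] by blast
  have "\<bar>f k + h k\<bar> \<le> (B + C) * (1 + real (absk k)) ^ (p + q)" for k
    using abs_triangle_ineq[of "f k" "h k"] f[of "p + q" k] h[of "p + q" k]
    by (simp add: distrib_right)
  then show ?thesis unfolding poly_growth_def by blast
qed

lemma poly_growth_mult:
  assumes "poly_growth f" "poly_growth h"
  shows "poly_growth (\<lambda>k. f k * h k)"
proof -
  obtain B p where "0 \<le> B" and f: "\<And>k q. p \<le> q \<Longrightarrow> \<bar>f k\<bar> \<le> B * (1 + real (absk k)) ^ q"
    using poly_growth_bound[OF assms(1)] by blast
  obtain C q where h: "\<And>k q'. q \<le> q' \<Longrightarrow> \<bar>h k\<bar> \<le> C * (1 + real (absk k)) ^ q'"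
    using poly_growth_bound[OF assms(2)] by blast
  have "\<bar>f k * h k\<bar> \<le> (B * C) * (1 + real (absk k)) ^ (p + q)" for k
    using mult_mono[OF f[OF order_refl] h[OF order_refl] _ abs_ge_zero, of k k] \<open>0 \<le> B\<close>
    by (simp add: abs_mult power_add algebra_simps)
  then show ?thesis unfolding poly_growth_def by blast
qed

lemma poly_growth_diff:
  assumes "poly_growth f" "poly_growth h"
  shows "poly_growth (\<lambda>k. f k - h k)"
  using poly_growth_add[OF assms(1) poly_growth_mult[OF poly_growth_const[of "-1"] assms(2)]]
  by simp

lemma poly_growth_sum:
  assumes "\<And>i. i \<in> I \<Longrightarrow> poly_growth (f i)"
  shows "poly_growth (\<lambda>k. \<Sum>i\<in>I. f i k)"
  using assms by (induction I rule: infinite_finite_induct)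
    (auto intro: poly_growth_add simp: poly_growth_const)

definition moment :: "('n::finite \<Rightarrow> nat^'n \<Rightarrow> real) \<Rightarrow> (nat^'n \<Rightarrow> real) \<Rightarrow> real^'n \<Rightarrow> real" where
  "moment g f \<phi> = (\<Sum>\<^sub>\<infinity>k. f k * weight g \<phi> k)"

definition expect :: "('n::finite \<Rightarrow> nat^'n \<Rightarrow> real) \<Rightarrow> (nat^'n \<Rightarrow> real) \<Rightarrow> real^'n \<Rightarrow> real" where
  "expect g f \<phi> = moment g f \<phi> / Zpart g \<phi>"

definition cov :: "('n::finite \<Rightarrow> nat^'n \<Rightarrow> real) \<Rightarrow> 'n \<Rightarrow> 'n \<Rightarrow> real^'n \<Rightarrow> real" where
  "cov g i l \<phi> = expect g (\<lambda>k. real (k $ i) * real (k $ l)) \<phi>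
     - expect g (\<lambda>k. real (k $ i)) \<phi> * expect g (\<lambda>k. real (k $ l)) \<phi>"

definition cumulant3 :: "('n::finite \<Rightarrow> nat^'n \<Rightarrow> real) \<Rightarrow> 'n \<Rightarrow> 'n \<Rightarrow> 'n \<Rightarrow> real^'n \<Rightarrow> real" where
  "cumulant3 g i j l \<phi> = expect g (\<lambda>k. real (k $ i) * real (k $ j) * real (k $ l)) \<phi>
     - expect g (\<lambda>k. real (k $ i)) \<phi> * expect g (\<lambda>k. real (k $ j) * real (k $ l)) \<phi>
     - expect g (\<lambda>k. real (k $ j)) \<phi> * expect g (\<lambda>k. real (k $ i) * real (k $ l)) \<phi>
     - expect g (\<lambda>k. real (k $ l)) \<phi> * expect g (\<lambda>k. real (k $ i) * real (k $ j)) \<phi>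
     + 2 * expect g (\<lambda>k. real (k $ i)) \<phi> * expect g (\<lambda>k. real (k $ j)) \<phi>
         * expect g (\<lambda>k. real (k $ l)) \<phi>"

definition mean_jacobian :: "('n::finite \<Rightarrow> nat^'n \<Rightarrow> real) \<Rightarrow> real^'n \<Rightarrow> real^'n^'n" where
  "mean_jacobian g \<phi> = (\<chi> i m. cov g i m \<phi> / \<phi> $ m)"

lemma Zpart_eq_moment: "Zpart g \<phi> = moment g (\<lambda>k. 1) \<phi>"
  by (simp add: Zpart_def moment_def)

lemma mean_eq_expect: "mean g \<phi> $ i = expect g (\<lambda>k. real (k $ i)) \<phi>"
  by (simp add: mean_def expect_def moment_def)

lemma cumulant3_commute: "cumulant3 g i j l \<phi> = cumulant3 g j i l \<phi>" "cumulant3 g i j l \<phi> = cumulant3 g i l j \<phi>"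
  unfolding cumulant3_def by (simp_all add: ac_simps)

section \<open>The mean map on the interior of the fugacity domain\<close>

locale zero_range =
  fixes g :: "'n::finite \<Rightarrow> nat^'n \<Rightarrow> real"
  assumes rates_nonneg: "\<And>i k. 0 \<le> g i k" and ND: "cond_ND g"

begin

abbreviation fug_interior :: "(real^'n) set" where
  "fug_interior \<equiv> interior (fug_dom g)"

lemma gfact_pos: "0 < gfact g k"
proof -
  define p where "p = (SOME p. is_path p k)"
  have "0 < g (p ! m) (path_pos p (Suc m))" if "m < length p" for m
  proof -
    have "p ! m \<in> set (take (Suc m) p)"
      using that by (simp add: in_set_conv_nth) (metis lessI nth_take)
    then have "0 < count_list (take (Suc m) p) (p ! m)"
      by (metis count_list_0_iff gr0I)
    then have "0 < path_pos p (Suc m) $ (p ! m)"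
      by (simp add: path_pos_def)
    then show ?thesis
      using rates_nonneg ND unfolding cond_ND_def by (metis less_eq_real_def not_gr0)
  qed
  then show ?thesis
    unfolding gfact_def Let_def p_def[symmetric] by (intro prod_pos) auto
qed

lemma weight_nonneg: "\<forall>i. 0 \<le> \<phi> $ i \<Longrightarrow> 0 \<le> weight g \<phi> k"
  unfolding weight_def vpow_def using gfact_pos[of k] by (auto intro!: prod_nonneg divide_nonneg_pos)

lemma weight_pos: "\<forall>i. 0 < \<phi> $ i \<Longrightarrow> 0 < weight g \<phi> k"
  unfolding weight_def vpow_def using gfact_pos[of k] by (auto intro!: prod_pos divide_pos_pos)

lemma weight_mono:
  assumes "\<forall>i. 0 \<le> \<phi> $ i \<and> \<phi> $ i \<le> \<psi> $ i"
  shows "weight g \<phi> k \<le> weight g \<psi> k"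
  unfolding weight_def vpow_def using assms gfact_pos[of k]
  by (intro divide_right_mono prod_mono) (auto intro: power_mono less_imp_le)

lemma fug_dom_downward_closed:
  assumes "\<psi> \<in> fug_dom g" "\<forall>i. 0 \<le> \<phi> $ i \<and> \<phi> $ i \<le> \<psi> $ i"
  shows "\<phi> \<in> fug_dom g"
proof -
  have "weight g \<psi> summable_on UNIV" using assms(1) by (simp add: fug_dom_def)
  then have "weight g \<phi> summable_on UNIV"
    by (rule summable_on_comparison_test) (use weight_mono weight_nonneg assms(2) in auto)
  then show ?thesis using assms(2) by (simp add: fug_dom_def)
qed

lemma interior_fug_domD:
  assumes "\<phi> \<in> fug_interior"
  shows "\<forall>i. 0 < \<phi> $ i" and "\<exists>r>1. r *\<^sub>R \<phi> \<in> fug_dom g"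
proof -
  obtain e where e: "0 < e" "ball \<phi> e \<subseteq> fug_dom g"
    using assms by (meson interior_subset open_contains_ball open_interior subset_trans)
  show "\<forall>i. 0 < \<phi> $ i"
  proof
    fix i
    have "norm (\<phi> - (\<phi> - (e/2) *\<^sub>R axis i 1)) = e/2" using e by (simp add: norm_axis_1)
    then have "\<phi> - (e/2) *\<^sub>R axis i 1 \<in> fug_dom g" using e by (auto simp: dist_norm)
    then have "0 \<le> (\<phi> - (e/2) *\<^sub>R axis i 1) $ i" unfolding fug_dom_def by blast
    then show "0 < \<phi> $ i" using e by simp
  qed
  define D where "D = 2 * (norm \<phi> + 1)"
  have "0 < D" unfolding D_def by (smt (verit) norm_ge_zero)
  define r where "r = 1 + e / D"
  have "1 < r" using e(1) \<open>0 < D\<close> by (simp add: r_def)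
  have "norm (r *\<^sub>R \<phi> - \<phi>) = e * norm \<phi> / D"
    using e(1) \<open>0 < D\<close> by (simp add: r_def algebra_simps)
  also have "\<dots> < e"
  proof -
    have "norm \<phi> < D" unfolding D_def by (smt (verit) norm_ge_zero)
    then have "e * norm \<phi> < e * D" using e(1) by (rule mult_strict_left_mono)
    then show ?thesis by (simp add: pos_divide_less_eq[OF \<open>0 < D\<close>] mult.commute)
  qed
  finally have "r *\<^sub>R \<phi> \<in> ball \<phi> e" by (simp add: dist_norm norm_minus_commute)
  then show "\<exists>r>1. r *\<^sub>R \<phi> \<in> fug_dom g" using \<open>1 < r\<close> e by blast
qed

lemma ball_coordinatewise_bounds:
  fixes \<phi> :: "real^'m::finite"
  assumes "\<forall>i. 0 < \<phi> $ i" "0 < s"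
  obtains d where "0 < d" "\<And>\<psi> i. \<psi> \<in> ball \<phi> d \<Longrightarrow> \<bar>\<psi> $ i - \<phi> $ i\<bar> \<le> s * \<phi> $ i"
proof
  define m where "m = Min (range (\<lambda>i. \<phi> $ i))"
  have m: "0 < m" "\<And>i. m \<le> \<phi> $ i" using assms by (auto simp: m_def)
  show "0 < s * m" using m assms by simp
  fix \<psi> i assume "\<psi> \<in> ball \<phi> (s * m)"
  then have "\<bar>\<psi> $ i - \<phi> $ i\<bar> < s * m"
    using component_le_norm_cart[of "\<psi> - \<phi>" i] by (simp add: dist_norm norm_minus_commute)
  also have "\<dots> \<le> s * \<phi> $ i" using m assms by simp
  finally show "\<bar>\<psi> $ i - \<phi> $ i\<bar> \<le> s * \<phi> $ i" by simp
qed

lemma interior_fug_domI: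
  assumes "\<forall>i. 0 < \<phi> $ i" "1 < r" "r *\<^sub>R \<phi> \<in> fug_dom g"
  shows "\<phi> \<in> fug_interior"
proof -
  obtain d where "0 < d" and d: "\<And>\<psi> i. \<psi> \<in> ball \<phi> d \<Longrightarrow> \<bar>\<psi> $ i - \<phi> $ i\<bar> \<le> min (r - 1) 1 * \<phi> $ i"
    using ball_coordinatewise_bounds[OF assms(1), of "min (r - 1) 1"] assms(2) by auto
  have "ball \<phi> d \<subseteq> fug_dom g"
  proof
    fix \<psi> assume "\<psi> \<in> ball \<phi> d"
    have "0 \<le> \<psi> $ i \<and> \<psi> $ i \<le> (r *\<^sub>R \<phi>) $ i" for i
    proof -
      have "0 \<le> \<phi> $ i" using assms(1) by (simp add: less_imp_le)
      then have "min (r - 1) 1 * \<phi> $ i \<le> 1 * \<phi> $ i" "min (r - 1) 1 * \<phi> $ i \<le> (r - 1) * \<phi> $ i"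
        by (intro mult_right_mono; simp)+
      then show ?thesis
        using d[OF \<open>\<psi> \<in> ball \<phi> d\<close>, of i] by (auto simp: abs_le_iff algebra_simps)
    qed
    then show "\<psi> \<in> fug_dom g" using fug_dom_downward_closed[OF assms(3)] by blast
  qed
  then show ?thesis using \<open>0 < d\<close> by (meson interior_maximal open_ball centre_in_ball subsetD)
qed

lemma weight_locally_dominated:
  assumes "\<phi> \<in> fug_interior"
  obtains d W where "0 < d" "W summable_on UNIV"
    "\<And>\<psi> i. \<psi> \<in> ball \<phi> d \<Longrightarrow> \<phi> $ i / 2 \<le> \<psi> $ i"
    "\<And>\<psi> k. \<psi> \<in> ball \<phi> d \<Longrightarrow> (1 + real (absk k)) ^ p * weight g \<psi> k \<le> W k"
proof -
  have pos: "\<forall>i. 0 < \<phi> $ i" using interior_fug_domD[OF assms] by blast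
  obtain r where "1 < r" and r: "r *\<^sub>R \<phi> \<in> fug_dom g" using interior_fug_domD[OF assms] by blast
  define s where "s = min ((r - 1) / 2) (1 / 2)"
  have s: "0 < s" "s \<le> 1 / 2" "1 + s < r" using \<open>1 < r\<close> by (auto simp: s_def min_def field_simps)
  define c where "c = (1 + s) / r"
  have "0 < c" "c < 1" using s \<open>1 < r\<close> by (auto simp: c_def)
  then obtain C where C: "\<And>n. (1 + real n) ^ p * c ^ n \<le> C"
    using poly_times_power_bounded[where p=p] by blast
  obtain d where "0 < d" and d: "\<And>\<psi> i. \<psi> \<in> ball \<phi> d \<Longrightarrow> \<bar>\<psi> $ i - \<phi> $ i\<bar> \<le> s * \<phi> $ i"
    using ball_coordinatewise_bounds[OF pos s(1)] by blast
  define W where "W k = C * weight g (r *\<^sub>R \<phi>) k" for k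
  have "W summable_on UNIV"
    using r unfolding W_def fug_dom_def by (intro summable_on_cmult_right) simp
  moreover have lower: "\<phi> $ i / 2 \<le> \<psi> $ i" if "\<psi> \<in> ball \<phi> d" for \<psi> i
  proof -
    have "s * \<phi> $ i \<le> 1 / 2 * \<phi> $ i"
      using s(2) pos by (intro mult_right_mono) (auto simp: less_imp_le)
    then show ?thesis using d[OF that, of i] by (simp add: abs_le_iff)
  qed
  moreover have "(1 + real (absk k)) ^ p * weight g \<psi> k \<le> W k" if "\<psi> \<in> ball \<phi> d" for \<psi> k
  proof -
    have "0 \<le> \<psi> $ i \<and> \<psi> $ i \<le> ((1 + s) *\<^sub>R \<phi>) $ i" for i
      using d[OF that, of i] lower[OF that, of i] pos[rule_format, of i]
      by (auto simp: abs_le_iff algebra_simps)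
    then have "weight g \<psi> k \<le> weight g ((1 + s) *\<^sub>R \<phi>) k"
      by (intro weight_mono allI)
    also have "\<dots> = (1 + s) ^ absk k * weight g \<phi> k"
      by (rule weight_scaleR)
    also have "\<dots> = c ^ absk k * weight g (r *\<^sub>R \<phi>) k"
      using \<open>1 < r\<close> by (simp add: weight_scaleR c_def power_divide)
    finally have "(1 + real (absk k)) ^ p * weight g \<psi> k
        \<le> ((1 + real (absk k)) ^ p * c ^ absk k) * weight g (r *\<^sub>R \<phi>) k"
      by (simp add: mult_left_mono mult.assoc)
    also have "\<dots> \<le> W k"
      unfolding W_def using C[of "absk k"] weight_nonneg[of "r *\<^sub>R \<phi>" k] pos \<open>1 < r\<close>
      by (intro mult_right_mono) (auto simp: less_imp_le)
    finally show ?thesis .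
  qed
  ultimately show ?thesis using \<open>0 < d\<close> that by blast
qed

lemma summable_moment:
  assumes "\<phi> \<in> fug_interior" "poly_growth f"
  shows "(\<lambda>k. f k * weight g \<phi> k) summable_on UNIV"
proof -
  obtain B p where "0 \<le> B" and f: "\<And>k q. p \<le> q \<Longrightarrow> \<bar>f k\<bar> \<le> B * (1 + real (absk k)) ^ q"
    using poly_growth_bound[OF assms(2)] by blast
  obtain d W where "0 < d" "W summable_on UNIV" "\<And>\<psi> i. \<psi> \<in> ball \<phi> d \<Longrightarrow> \<phi> $ i / 2 \<le> \<psi> $ i"
    and W: "\<And>\<psi> k. \<psi> \<in> ball \<phi> d \<Longrightarrow> (1 + real (absk k)) ^ p * weight g \<psi> k \<le> W k"
    by (rule weight_locally_dominated[OF assms(1), of p]) blast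
  have w: "0 \<le> weight g \<phi> k" for k
    using less_imp_le[OF weight_pos[OF interior_fug_domD(1)[OF assms(1)]]] .
  show ?thesis
  proof (rule summable_on_abs_dominated[OF summable_on_cmult_right[OF \<open>W summable_on UNIV\<close>, of B]])
    fix k
    have "\<bar>f k * weight g \<phi> k\<bar> \<le> B * ((1 + real (absk k)) ^ p * weight g \<phi> k)"
      using mult_right_mono[OF f[OF order_refl] w] by (simp add: abs_mult w mult.assoc)
    also have "\<dots> \<le> B * W k"
      using W[of \<phi> k] \<open>0 < d\<close> \<open>0 \<le> B\<close> by (intro mult_left_mono) auto
    finally show "\<bar>f k * weight g \<phi> k\<bar> \<le> B * W k" .
  qed
qed

lemma moment_add:
  assumes "\<phi> \<in> fug_interior" "poly_growth f" "poly_growth h"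
  shows "moment g (\<lambda>k. f k + h k) \<phi> = moment g f \<phi> + moment g h \<phi>"
  unfolding moment_def distrib_right
  by (rule infsum_add[OF summable_moment[OF assms(1,2)] summable_moment[OF assms(1,3)]])

lemma moment_cmult: "moment g (\<lambda>k. c * f k) \<phi> = c * moment g f \<phi>"
  unfolding moment_def mult.assoc by (rule infsum_cmult_right')

lemma moment_const: "moment g (\<lambda>k. c) \<phi> = c * Zpart g \<phi>"
  using moment_cmult[of c "\<lambda>k. 1"] by (simp add: Zpart_eq_moment)

lemma moment_sum:
  assumes "\<phi> \<in> fug_interior" "finite I" "\<And>i. i \<in> I \<Longrightarrow> poly_growth (f i)"
  shows "moment g (\<lambda>k. \<Sum>i\<in>I. f i k) \<phi> = (\<Sum>i\<in>I. moment g (f i) \<phi>)"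
  unfolding moment_def sum_distrib_right
  by (rule infsum_sum_fun[OF assms(2) summable_moment[OF assms(1,3)]])

lemma Zpart_pos:
  assumes "\<phi> \<in> fug_interior"
  shows "0 < Zpart g \<phi>"
proof -
  have w: "0 < weight g \<phi> k" for k
    using weight_pos[OF interior_fug_domD(1)[OF assms]] .
  have "weight g \<phi> summable_on UNIV"
    using summable_moment[OF assms poly_growth_const[of 1]] by simp
  then have "(\<Sum>\<^sub>\<infinity>k\<in>{0}. weight g \<phi> k) \<le> Zpart g \<phi>"
    unfolding Zpart_def using w by (intro infsum_mono_neutral) (auto simp: less_imp_le)
  then show ?thesis using w[of 0] by simp
qed

lemma has_derivative_moment:
  assumes \<phi>: "\<phi> \<in> fug_interior" and f: "poly_growth f"
  shows "(moment g f has_derivative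
           (\<lambda>h. \<Sum>m\<in>UNIV. h $ m * moment g (\<lambda>k. real (k $ m) * f k) \<phi> / \<phi> $ m)) (at \<phi>)"
proof -
  have pos: "\<forall>i. 0 < \<phi> $ i" by (rule interior_fug_domD(1)[OF \<phi>])
  obtain B p where "0 \<le> B" and f_bound: "\<And>k q. p \<le> q \<Longrightarrow> \<bar>f k\<bar> \<le> B * (1 + real (absk k)) ^ q"
    using poly_growth_bound[OF f] by blast
  obtain d W where "0 < d" "W summable_on UNIV"
    and lower: "\<And>\<psi> i. \<psi> \<in> ball \<phi> d \<Longrightarrow> \<phi> $ i / 2 \<le> \<psi> $ i"
    and W: "\<And>\<psi> k. \<psi> \<in> ball \<phi> d \<Longrightarrow> (1 + real (absk k)) ^ Suc p * weight g \<psi> k \<le> W k"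
    by (rule weight_locally_dominated[OF \<phi>, of "Suc p"]) blast
  define a where "a m k \<psi> = real (k $ m) * f k * weight g \<psi> k / \<psi> $ m" for m k \<psi>
  define C where "C = B * (\<Sum>m\<in>UNIV. 2 / \<phi> $ m)"
  have \<psi>_pos: "\<forall>i. 0 < \<psi> $ i" if "\<psi> \<in> ball \<phi> d" for \<psi>
    using lower[OF that] pos by (smt (verit, best) half_gt_zero)
  have weight_bound: "\<bar>f k\<bar> * (1 + real (absk k)) * weight g \<psi> k \<le> B * W k"
    if "\<psi> \<in> ball \<phi> d" for \<psi> k
  proof -
    have "\<bar>f k\<bar> * (1 + real (absk k)) * weight g \<psi> k
        \<le> B * (1 + real (absk k)) ^ p * (1 + real (absk k)) * weight g \<psi> k"
      using f_bound[OF order_refl, of k] less_imp_le[OF weight_pos[OF \<psi>_pos[OF that], of k]]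
      by (intro mult_right_mono) auto
    also have "\<dots> = B * ((1 + real (absk k)) ^ Suc p * weight g \<psi> k)" by simp
    also have "\<dots> \<le> B * W k" using W[OF that] \<open>0 \<le> B\<close> by (rule mult_left_mono)
    finally show ?thesis .
  qed
  have a_bound: "(\<Sum>m\<in>UNIV. \<bar>a m k \<psi>\<bar>) \<le> C * W k" if "\<psi> \<in> ball \<phi> d" for k \<psi>
  proof -
    have w: "0 < weight g \<psi> k" by (rule weight_pos[OF \<psi>_pos[OF that]])
    have "\<bar>a m k \<psi>\<bar> \<le> (\<bar>f k\<bar> * (1 + real (absk k)) * weight g \<psi> k) * (2 / \<phi> $ m)" for m
    proof -
      have "weight g \<psi> k / \<psi> $ m \<le> weight g \<psi> k * (2 / \<phi> $ m)"
        using lower[OF that, of m] pos \<psi>_pos[OF that] w by (simp add: field_simps)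
      moreover have "real (k $ m) \<le> 1 + real (absk k)" using coordinate_le_absk[of k m] by simp
      moreover have "0 \<le> weight g \<psi> k / \<psi> $ m"
        using w \<psi>_pos[OF that] by (intro divide_nonneg_pos) (auto simp: less_imp_le)
      ultimately have "real (k $ m) * (weight g \<psi> k / \<psi> $ m) \<le> (1 + real (absk k)) * (weight g \<psi> k * (2 / \<phi> $ m))"
        by (intro mult_mono) auto
      then have "\<bar>f k\<bar> * (real (k $ m) * (weight g \<psi> k / \<psi> $ m))
          \<le> \<bar>f k\<bar> * ((1 + real (absk k)) * (weight g \<psi> k * (2 / \<phi> $ m)))"
        by (rule mult_left_mono) simp
      moreover have "\<bar>a m k \<psi>\<bar> = \<bar>f k\<bar> * (real (k $ m) * (weight g \<psi> k / \<psi> $ m))"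
        using w \<psi>_pos[OF that, rule_format, of m] by (simp add: a_def abs_mult)
      ultimately show ?thesis by (simp only: mult.assoc)
    qed
    then have "(\<Sum>m\<in>UNIV. \<bar>a m k \<psi>\<bar>) \<le> (\<Sum>m\<in>UNIV. (\<bar>f k\<bar> * (1 + real (absk k)) * weight g \<psi> k) * (2 / \<phi> $ m))"
      by (rule sum_mono)
    also have "\<dots> = (\<bar>f k\<bar> * (1 + real (absk k)) * weight g \<psi> k) * (\<Sum>m\<in>UNIV. 2 / \<phi> $ m)"
      by (simp add: sum_distrib_left)
    also have "\<dots> \<le> (B * W k) * (\<Sum>m\<in>UNIV. 2 / \<phi> $ m)"
      using weight_bound[OF that] pos by (intro mult_right_mono sum_nonneg) (auto simp: less_imp_le)
    finally show ?thesis by (simp add: C_def algebra_simps)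
  qed
  have "((\<lambda>\<psi>. \<Sum>\<^sub>\<infinity>k. f k * weight g \<psi> k) has_derivative
      (\<lambda>h. \<Sum>\<^sub>\<infinity>k. \<Sum>m\<in>UNIV. h $ m * a m k \<phi>)) (at \<phi>)"
  proof (rule has_derivative_infsum[of "ball \<phi> d"])
    show "((\<lambda>\<psi>. f k * weight g \<psi> k) has_derivative (\<lambda>h. \<Sum>m\<in>UNIV. h $ m * a m k \<psi>)) (at \<psi>)"
      if "\<psi> \<in> ball \<phi> d" for k \<psi>
    proof -
      have "((\<lambda>\<psi>. f k * weight g \<psi> k) has_derivative
          (\<lambda>h. f k * (\<Sum>m\<in>UNIV. h $ m * real (k $ m) * weight g \<psi> k / \<psi> $ m))) (at \<psi>)"
        by (rule has_derivative_mult_right[OF has_derivative_weight[OF \<psi>_pos[OF that]]])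
      moreover have "(\<lambda>h. f k * (\<Sum>m\<in>UNIV. h $ m * real (k $ m) * weight g \<psi> k / \<psi> $ m))
          = (\<lambda>h. \<Sum>m\<in>UNIV. h $ m * a m k \<psi>)"
        by (simp add: a_def fun_eq_iff sum_distrib_left algebra_simps)
      ultimately show ?thesis by simp
    qed
    show "\<bar>\<Sum>m\<in>UNIV. h $ m * a m k \<psi>\<bar> \<le> C * W k * norm h" if "\<psi> \<in> ball \<phi> d" for k \<psi> h
      using order_trans[OF abs_sum_coordinates_le mult_left_mono[OF a_bound[OF that] norm_ge_zero]]
      by (simp add: mult.commute)
    show "(\<lambda>k. C * W k) summable_on UNIV"
      by (rule summable_on_cmult_right) fact
    show "(\<lambda>k. f k * weight g \<psi> k) summable_on UNIV" if "\<psi> \<in> ball \<phi> d" for \<psi>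
    proof (rule summable_on_abs_dominated[OF summable_on_cmult_right[OF \<open>W summable_on UNIV\<close>, of B]])
      fix k
      have w: "0 < weight g \<psi> k" by (rule weight_pos[OF \<psi>_pos[OF that]])
      have "\<bar>f k\<bar> * 1 * weight g \<psi> k \<le> \<bar>f k\<bar> * (1 + real (absk k)) * weight g \<psi> k"
        using w by (intro mult_right_mono mult_left_mono) auto
      then have "\<bar>f k * weight g \<psi> k\<bar> \<le> \<bar>f k\<bar> * (1 + real (absk k)) * weight g \<psi> k"
        using w by (simp add: abs_mult)
      then show "\<bar>f k * weight g \<psi> k\<bar> \<le> B * W k" using weight_bound[OF that, of k] by linarith
    qed
  qed (use \<open>0 < d\<close> in auto)
  moreover have "(\<Sum>\<^sub>\<infinity>k. \<Sum>m\<in>UNIV. h $ m * a m k \<phi>)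
      = (\<Sum>m\<in>UNIV. h $ m * moment g (\<lambda>k. real (k $ m) * f k) \<phi> / \<phi> $ m)" for h
  proof -
    have summable: "(\<lambda>k. h $ m * a m k \<phi>) summable_on UNIV" for m
    proof -
      have "(\<lambda>k. real (k $ m) * f k * weight g \<phi> k) summable_on UNIV"
        using summable_moment[OF \<phi> poly_growth_mult[OF poly_growth_coordinate f], of m] by simp
      then have "(\<lambda>k. real (k $ m) * f k * weight g \<phi> k * inverse (\<phi> $ m)) summable_on UNIV"
        by (rule summable_on_cmult_left)
      then show ?thesis
        unfolding a_def divide_inverse by (rule summable_on_cmult_right)
    qed
    have "(\<Sum>\<^sub>\<infinity>k. \<Sum>m\<in>UNIV. h $ m * a m k \<phi>) = (\<Sum>m\<in>UNIV. \<Sum>\<^sub>\<infinity>k. h $ m * a m k \<phi>)"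
      by (rule infsum_sum_fun) (simp_all add: summable)
    also have "\<dots> = (\<Sum>m\<in>UNIV. h $ m * moment g (\<lambda>k. real (k $ m) * f k) \<phi> / \<phi> $ m)"
    proof (rule sum.cong)
      fix m
      have "(\<Sum>\<^sub>\<infinity>k. h $ m * a m k \<phi>)
          = h $ m * ((\<Sum>\<^sub>\<infinity>k. real (k $ m) * f k * weight g \<phi> k) * inverse (\<phi> $ m))"
        unfolding a_def divide_inverse by (simp only: infsum_cmult_right' infsum_cmult_left')
      then show "(\<Sum>\<^sub>\<infinity>k. h $ m * a m k \<phi>) = h $ m * moment g (\<lambda>k. real (k $ m) * f k) \<phi> / \<phi> $ m"
        by (simp add: moment_def divide_inverse)
    qed simp
    finally show ?thesis .
  qed
  ultimately show ?thesis
    by (simp add: moment_def[abs_def])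
qed

lemma has_derivative_expect:
  assumes \<phi>: "\<phi> \<in> fug_interior" and f: "poly_growth f"
  shows "(expect g f has_derivative (\<lambda>h. \<Sum>m\<in>UNIV. h $ m *
      (expect g (\<lambda>k. real (k $ m) * f k) \<phi> - expect g (\<lambda>k. real (k $ m)) \<phi> * expect g f \<phi>) / \<phi> $ m))
    (at \<phi>)"
proof -
  define Z where "Z = Zpart g \<phi>"
  have "Z \<noteq> 0" using Zpart_pos[OF \<phi>] by (simp add: Z_def)
  have Z: "(Zpart g has_derivative (\<lambda>h. \<Sum>m\<in>UNIV. h $ m * moment g (\<lambda>k. real (k $ m)) \<phi> / \<phi> $ m)) (at \<phi>)"
    using has_derivative_moment[OF \<phi> poly_growth_const[of 1]] by (simp add: Zpart_eq_moment[abs_def])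
  have "((\<lambda>\<psi>. moment g f \<psi> / Zpart g \<psi>) has_derivative (\<lambda>h.
      ((\<Sum>m\<in>UNIV. h $ m * moment g (\<lambda>k. real (k $ m) * f k) \<phi> / \<phi> $ m) * Z
       - moment g f \<phi> * (\<Sum>m\<in>UNIV. h $ m * moment g (\<lambda>k. real (k $ m)) \<phi> / \<phi> $ m)) / (Z * Z))) (at \<phi>)"
    unfolding Z_def by (rule has_derivative_divide'[OF has_derivative_moment[OF \<phi> f] Z]) (fact \<open>Z \<noteq> 0\<close>[unfolded Z_def])
  moreover have "((\<Sum>m\<in>UNIV. h $ m * moment g (\<lambda>k. real (k $ m) * f k) \<phi> / \<phi> $ m) * Z
       - moment g f \<phi> * (\<Sum>m\<in>UNIV. h $ m * moment g (\<lambda>k. real (k $ m)) \<phi> / \<phi> $ m)) / (Z * Z)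
    = (\<Sum>m\<in>UNIV. h $ m *
      (expect g (\<lambda>k. real (k $ m) * f k) \<phi> - expect g (\<lambda>k. real (k $ m)) \<phi> * expect g f \<phi>) / \<phi> $ m)"
    for h
  proof -
    have "((\<Sum>m\<in>UNIV. h $ m * moment g (\<lambda>k. real (k $ m) * f k) \<phi> / \<phi> $ m) * Z
       - moment g f \<phi> * (\<Sum>m\<in>UNIV. h $ m * moment g (\<lambda>k. real (k $ m)) \<phi> / \<phi> $ m)) / (Z * Z)
      = (\<Sum>m\<in>UNIV. (h $ m * moment g (\<lambda>k. real (k $ m) * f k) \<phi> / \<phi> $ m * Z
          - moment g f \<phi> * (h $ m * moment g (\<lambda>k. real (k $ m)) \<phi> / \<phi> $ m)) / (Z * Z))"
      by (simp only: sum_distrib_right sum_distrib_left sum_subtractf[symmetric] sum_divide_distrib)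
    also have "\<dots> = (\<Sum>m\<in>UNIV. h $ m *
      (expect g (\<lambda>k. real (k $ m) * f k) \<phi> - expect g (\<lambda>k. real (k $ m)) \<phi> * expect g f \<phi>) / \<phi> $ m)"
      using \<open>Z \<noteq> 0\<close> interior_fug_domD(1)[OF \<phi>]
      by (intro sum.cong refl) (simp add: expect_def Z_def field_simps less_imp_neq[symmetric])
    finally show ?thesis .
  qed
  ultimately show ?thesis
    by (simp add: expect_def[abs_def])
qed

lemma has_derivative_mean:
  assumes "\<phi> \<in> fug_interior"
  shows "(mean g has_derivative (*v) (mean_jacobian g \<phi>)) (at \<phi>)"
proof (rule has_derivative_vec_lambda)
  fix i
  have "((\<lambda>\<psi>. expect g (\<lambda>k. real (k $ i)) \<psi>) has_derivative (\<lambda>h. \<Sum>m\<in>UNIV. h $ m *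
      (expect g (\<lambda>k. real (k $ m) * real (k $ i)) \<phi>
       - expect g (\<lambda>k. real (k $ m)) \<phi> * expect g (\<lambda>k. real (k $ i)) \<phi>) / \<phi> $ m)) (at \<phi>)"
    by (rule has_derivative_expect[OF assms poly_growth_coordinate])
  moreover have "(\<Sum>m\<in>UNIV. h $ m * (expect g (\<lambda>k. real (k $ m) * real (k $ i)) \<phi>
       - expect g (\<lambda>k. real (k $ m)) \<phi> * expect g (\<lambda>k. real (k $ i)) \<phi>) / \<phi> $ m)
    = (mean_jacobian g \<phi> *v h) $ i" for h
    unfolding mean_jacobian_def matrix_vector_mult_def cov_def
    by (simp add: mult.commute)
  ultimately show "((\<lambda>\<psi>. mean g \<psi> $ i) has_derivative (\<lambda>h. (mean_jacobian g \<phi> *v h) $ i)) (at \<phi>)"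
    by (simp add: mean_eq_expect)
qed

lemma has_derivative_cov:
  assumes \<phi>: "\<phi> \<in> fug_interior"
  shows "(cov g i l has_derivative (\<lambda>h. \<Sum>m\<in>UNIV. h $ m * cumulant3 g m i l \<phi> / \<phi> $ m)) (at \<phi>)"
proof -
  let ?E = "\<lambda>f. expect g f \<phi>"
  note d = has_derivative_expect[OF \<phi>]
  have "(cov g i l has_derivative (\<lambda>h.
      (\<Sum>m\<in>UNIV. h $ m * (?E (\<lambda>k. real (k $ m) * (real (k $ i) * real (k $ l)))
         - ?E (\<lambda>k. real (k $ m)) * ?E (\<lambda>k. real (k $ i) * real (k $ l))) / \<phi> $ m)
      - (?E (\<lambda>k. real (k $ i)) * (\<Sum>m\<in>UNIV. h $ m * (?E (\<lambda>k. real (k $ m) * real (k $ l))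
           - ?E (\<lambda>k. real (k $ m)) * ?E (\<lambda>k. real (k $ l))) / \<phi> $ m)
         + (\<Sum>m\<in>UNIV. h $ m * (?E (\<lambda>k. real (k $ m) * real (k $ i))
           - ?E (\<lambda>k. real (k $ m)) * ?E (\<lambda>k. real (k $ i))) / \<phi> $ m) * ?E (\<lambda>k. real (k $ l)))))
    (at \<phi>)"
    unfolding cov_def[abs_def]
    by (intro has_derivative_diff has_derivative_mult d poly_growth_mult poly_growth_coordinate)
  moreover have "(\<Sum>m\<in>UNIV. h $ m * (?E (\<lambda>k. real (k $ m) * (real (k $ i) * real (k $ l)))
         - ?E (\<lambda>k. real (k $ m)) * ?E (\<lambda>k. real (k $ i) * real (k $ l))) / \<phi> $ m)
      - (?E (\<lambda>k. real (k $ i)) * (\<Sum>m\<in>UNIV. h $ m * (?E (\<lambda>k. real (k $ m) * real (k $ l))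
           - ?E (\<lambda>k. real (k $ m)) * ?E (\<lambda>k. real (k $ l))) / \<phi> $ m)
         + (\<Sum>m\<in>UNIV. h $ m * (?E (\<lambda>k. real (k $ m) * real (k $ i))
           - ?E (\<lambda>k. real (k $ m)) * ?E (\<lambda>k. real (k $ i))) / \<phi> $ m) * ?E (\<lambda>k. real (k $ l)))
    = (\<Sum>m\<in>UNIV. h $ m * cumulant3 g m i l \<phi> / \<phi> $ m)" for h
    unfolding sum_distrib_left sum_distrib_right sum_subtractf[symmetric] sum.distrib[symmetric]
    by (intro sum.cong refl) (simp add: cumulant3_def divide_inverse algebra_simps)
  ultimately show ?thesis by simp
qed

lemma has_derivative_mean_jacobian_entry:
  assumes \<phi>: "\<phi> \<in> fug_interior"
  shows "((\<lambda>\<psi>. mean_jacobian g \<psi> $ i $ l) has_derivative (\<lambda>h.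
     ((\<Sum>m\<in>UNIV. h $ m * cumulant3 g m i l \<phi> / \<phi> $ m) * \<phi> $ l - cov g i l \<phi> * h $ l)
       / (\<phi> $ l * \<phi> $ l))) (at \<phi>)"
  unfolding mean_jacobian_def vec_lambda_beta
  using interior_fug_domD(1)[OF \<phi>, rule_format, of l]
  by (intro has_derivative_divide' has_derivative_cov[OF \<phi>] has_derivative_vec_nth) simp

lemma expect_cmult: "expect g (\<lambda>k. c * f k) \<phi> = c * expect g f \<phi>"
  by (simp add: expect_def moment_cmult)

lemma expect_sum:
  assumes "\<phi> \<in> fug_interior" "finite I" "\<And>i. i \<in> I \<Longrightarrow> poly_growth (f i)"
  shows "expect g (\<lambda>k. \<Sum>i\<in>I. f i k) \<phi> = (\<Sum>i\<in>I. expect g (f i) \<phi>)"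
  by (simp add: expect_def moment_sum[OF assms] sum_divide_distrib)

lemma expect_centered_product:
  assumes \<phi>: "\<phi> \<in> fug_interior" and f: "poly_growth f" and h: "poly_growth h"
  shows "expect g (\<lambda>k. (f k - expect g f \<phi>) * (h k - expect g h \<phi>)) \<phi>
    = expect g (\<lambda>k. f k * h k) \<phi> - expect g f \<phi> * expect g h \<phi>"
proof -
  define a b where "a = expect g f \<phi>" and "b = expect g h \<phi>"
  have fh: "poly_growth (\<lambda>k. f k * h k)" by (rule poly_growth_mult[OF f h])
  have bf: "poly_growth (\<lambda>k. (- b) * f k)" by (rule poly_growth_mult[OF poly_growth_const f])
  have ah: "poly_growth (\<lambda>k. (- a) * h k)" by (rule poly_growth_mult[OF poly_growth_const h])
  have "moment g (\<lambda>k. (f k - a) * (h k - b)) \<phi>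
      = moment g (\<lambda>k. (f k * h k + (- b) * f k) + ((- a) * h k + a * b)) \<phi>"
    by (rule arg_cong[where f="\<lambda>F. moment g F \<phi>"]) (simp add: fun_eq_iff algebra_simps)
  also have "\<dots> = (moment g (\<lambda>k. f k * h k) \<phi> + moment g (\<lambda>k. (- b) * f k) \<phi>)
      + (moment g (\<lambda>k. (- a) * h k) \<phi> + moment g (\<lambda>k. a * b) \<phi>)"
    by (simp only: moment_add[OF \<phi> poly_growth_add[OF fh bf] poly_growth_add[OF ah poly_growth_const]]
        moment_add[OF \<phi> fh bf] moment_add[OF \<phi> ah poly_growth_const])
  also have "\<dots> = moment g (\<lambda>k. f k * h k) \<phi> - b * moment g f \<phi> - a * moment g h \<phi> + a * b * Zpart g \<phi>"
    unfolding moment_cmult moment_const by simp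
  finally have "moment g (\<lambda>k. (f k - a) * (h k - b)) \<phi>
      = moment g (\<lambda>k. f k * h k) \<phi> - b * moment g f \<phi> - a * moment g h \<phi> + a * b * Zpart g \<phi>" .
  moreover have "moment g f \<phi> = a * Zpart g \<phi>" "moment g h \<phi> = b * Zpart g \<phi>"
    using Zpart_pos[OF \<phi>] by (simp_all add: a_def b_def expect_def)
  ultimately show ?thesis
    unfolding a_def[symmetric] b_def[symmetric] using Zpart_pos[OF \<phi>]
    by (simp add: expect_def field_simps)
qed

lemma moment_pos:
  assumes "\<phi> \<in> fug_interior" "poly_growth f" "\<And>k. 0 \<le> f k" "0 < f k0"
  shows "0 < moment g f \<phi>"
proof -
  have w: "0 < weight g \<phi> k" for k
    using weight_pos[OF interior_fug_domD(1)[OF assms(1)]] .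
  have "(\<Sum>\<^sub>\<infinity>k\<in>{k0}. f k * weight g \<phi> k) \<le> moment g f \<phi>"
    unfolding moment_def using summable_moment[OF assms(1,2)] assms(3) w
    by (intro infsum_mono_neutral) (auto intro: mult_nonneg_nonneg less_imp_le)
  then show ?thesis using mult_pos_pos[OF assms(4) w[of k0]] by simp
qed

lemma cov_quadratic_form_pos:
  assumes \<phi>: "\<phi> \<in> fug_interior" and "v \<noteq> 0"
  shows "0 < (\<Sum>i\<in>UNIV. \<Sum>l\<in>UNIV. v $ i * v $ l * cov g i l \<phi>)"
proof -
  define c where "c i k = real (k $ i) - expect g (\<lambda>k. real (k $ i)) \<phi>" for i k
  define L where "L k = (\<Sum>i\<in>UNIV. v $ i * c i k)" for k
  have c: "poly_growth (c i)" for i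
    unfolding c_def by (intro poly_growth_diff poly_growth_coordinate poly_growth_const)
  have vc: "poly_growth (\<lambda>k. v $ i * v $ l * (c i k * c l k))" for i l
    by (intro poly_growth_mult poly_growth_const c)
  have "(\<Sum>i\<in>UNIV. \<Sum>l\<in>UNIV. v $ i * v $ l * cov g i l \<phi>)
      = (\<Sum>i\<in>UNIV. \<Sum>l\<in>UNIV. expect g (\<lambda>k. v $ i * v $ l * (c i k * c l k)) \<phi>)"
    unfolding expect_cmult c_def
    by (simp add: expect_centered_product[OF \<phi> poly_growth_coordinate poly_growth_coordinate] cov_def)
  also have "\<dots> = expect g (\<lambda>k. L k ^ 2) \<phi>"
    unfolding L_def power2_eq_square sum_product
    using vc by (simp add: expect_sum[OF \<phi>] poly_growth_sum ac_simps)
  also have "\<dots> > 0"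
  proof -
    obtain i where "v $ i \<noteq> 0" using \<open>v \<noteq> 0\<close> by (metis vec_eq_iff zero_index)
    have "v $ j * c j (axis i 1) = (if j = i then v $ j else 0) + v $ j * c j 0" for j
      by (simp add: c_def axis_def algebra_simps)
    then have "L (axis i 1) = v $ i + L 0"
      by (simp add: L_def sum.distrib)
    then obtain k0 where "L k0 \<noteq> 0" using \<open>v $ i \<noteq> 0\<close> by (metis add_cancel_right_left)
    have "poly_growth L"
      using poly_growth_sum[of UNIV "\<lambda>i k. v $ i * c i k"] poly_growth_mult[OF poly_growth_const c]
      by (simp add: L_def[abs_def])
    then have L2: "poly_growth (\<lambda>k. L k ^ 2)"
      using poly_growth_mult by (simp add: power2_eq_square)
    have "0 < moment g (\<lambda>k. L k ^ 2) \<phi>"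
      by (rule moment_pos[OF \<phi> L2, of k0]) (use \<open>L k0 \<noteq> 0\<close> in auto)
    then show ?thesis using Zpart_pos[OF \<phi>] by (simp add: expect_def)
  qed
  finally show ?thesis .
qed

lemma log_path_in_fug_interior:
  assumes \<phi>: "\<phi> \<in> fug_interior" and \<psi>: "\<psi> \<in> fug_interior" and t: "0 \<le> t" "t \<le> 1"
  shows "log_path \<phi> \<psi> t \<in> fug_interior"
proof -
  have \<phi>_pos: "\<forall>i. 0 < \<phi> $ i" and \<psi>_pos: "\<forall>i. 0 < \<psi> $ i"
    using interior_fug_domD(1) \<phi> \<psi> by blast+
  obtain r1 r2 where "1 < r1" "r1 *\<^sub>R \<phi> \<in> fug_dom g" "1 < r2" "r2 *\<^sub>R \<psi> \<in> fug_dom g"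
    using interior_fug_domD(2) \<phi> \<psi> by metis
  define r where "r = min r1 r2"
  have "1 < r" using \<open>1 < r1\<close> \<open>1 < r2\<close> by (simp add: r_def)
  have "r \<le> r1" "r \<le> r2" by (simp_all add: r_def)
  have "0 \<le> (r *\<^sub>R \<phi>) $ i \<and> (r *\<^sub>R \<phi>) $ i \<le> (r1 *\<^sub>R \<phi>) $ i" for i
    using \<phi>_pos[rule_format, of i] \<open>1 < r\<close> \<open>r \<le> r1\<close> by (auto intro!: mult_right_mono)
  then have r\<phi>: "r *\<^sub>R \<phi> \<in> fug_dom g"
    by (intro fug_dom_downward_closed[OF \<open>r1 *\<^sub>R \<phi> \<in> fug_dom g\<close>] allI)
  have "0 \<le> (r *\<^sub>R \<psi>) $ i \<and> (r *\<^sub>R \<psi>) $ i \<le> (r2 *\<^sub>R \<psi>) $ i" for i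
    using \<psi>_pos[rule_format, of i] \<open>1 < r\<close> \<open>r \<le> r2\<close> by (auto intro!: mult_right_mono)
  then have r\<psi>: "r *\<^sub>R \<psi> \<in> fug_dom g"
    by (intro fug_dom_downward_closed[OF \<open>r2 *\<^sub>R \<psi> \<in> fug_dom g\<close>] allI)
  have pos: "\<forall>i. 0 < (r *\<^sub>R \<phi>) $ i" "\<forall>i. 0 < (r *\<^sub>R \<psi>) $ i"
    using \<open>1 < r\<close> \<phi>_pos \<psi>_pos by simp_all
  have "weight g (log_path (r *\<^sub>R \<phi>) (r *\<^sub>R \<psi>) t) k
      \<le> (1 - t) * weight g (r *\<^sub>R \<phi>) k + t * weight g (r *\<^sub>R \<psi>) k" for k
  proof -
    have "vpow (log_path (r *\<^sub>R \<phi>) (r *\<^sub>R \<psi>) t) k / gfact g k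
        \<le> ((1 - t) * vpow (r *\<^sub>R \<phi>) k + t * vpow (r *\<^sub>R \<psi>) k) / gfact g k"
      using gfact_pos[of k] by (intro divide_right_mono vpow_log_path_le[OF pos t]) simp
    then show ?thesis by (simp add: weight_def add_divide_distrib)
  qed
  moreover have "(\<lambda>k. (1 - t) * weight g (r *\<^sub>R \<phi>) k + t * weight g (r *\<^sub>R \<psi>) k) summable_on UNIV"
    using r\<phi> r\<psi> unfolding fug_dom_def by (intro summable_on_add summable_on_cmult_right) auto
  ultimately have "weight g (log_path (r *\<^sub>R \<phi>) (r *\<^sub>R \<psi>) t) summable_on UNIV"
    by (intro summable_on_comparison_test[OF _ _ weight_nonneg]) (auto simp: log_path_pos less_imp_le)
  then have scaled: "r *\<^sub>R log_path \<phi> \<psi> t \<in> fug_dom g"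
    using \<open>1 < r\<close> \<phi>_pos \<psi>_pos
    by (simp add: fug_dom_def log_path_scaleR log_path_pos less_imp_le)
  show ?thesis
    by (intro interior_fug_domI[OF _ \<open>1 < r\<close> scaled] allI log_path_pos)
qed

lemma mean_inj_on: "inj_on (mean g) fug_interior"
proof (rule inj_onI, rule ccontr)
  fix \<phi> \<psi> assume \<phi>: "\<phi> \<in> fug_interior" and \<psi>: "\<psi> \<in> fug_interior"
    and eq: "mean g \<phi> = mean g \<psi>" and "\<phi> \<noteq> \<psi>"
  have \<phi>_pos: "\<forall>i. 0 < \<phi> $ i" and \<psi>_pos: "\<forall>i. 0 < \<psi> $ i"
    using interior_fug_domD(1) \<phi> \<psi> by blast+
  define d where "d = (\<chi> i. ln (\<psi> $ i) - ln (\<phi> $ i))"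
  have "d \<noteq> 0"
  proof
    assume "d = 0"
    then have "\<psi> $ i = \<phi> $ i" for i
      using \<phi>_pos \<psi>_pos by (simp add: d_def vec_eq_iff)
    then show False using \<open>\<phi> \<noteq> \<psi>\<close> by (simp add: vec_eq_iff)
  qed
  define h where "h t = d \<bullet> mean g (log_path \<phi> \<psi> t)" for t
  have "h 0 < h 1"
  proof (rule DERIV_pos_imp_increasing[of 0 1 h])
    fix t :: real assume t: "0 \<le> t" "t \<le> 1"
    define p where "p = log_path \<phi> \<psi> t"
    have p: "p \<in> fug_interior" unfolding p_def by (rule log_path_in_fug_interior[OF \<phi> \<psi> t])
    have "((\<lambda>t. mean g (log_path \<phi> \<psi> t)) has_derivative
        (\<lambda>s. mean_jacobian g p *v (s *\<^sub>R (\<chi> i. p $ i * d $ i)))) (at t)"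
      using has_derivative_compose[OF has_vector_derivative_log_path[unfolded has_vector_derivative_def]
          has_derivative_mean[OF p[unfolded p_def]]]
      by (simp add: p_def d_def)
    then have "(h has_derivative (\<lambda>s. d \<bullet> (mean_jacobian g p *v (s *\<^sub>R (\<chi> i. p $ i * d $ i))))) (at t)"
      unfolding h_def by (rule has_derivative_inner_right)
    moreover have "d \<bullet> (mean_jacobian g p *v (s *\<^sub>R (\<chi> i. p $ i * d $ i)))
        = s * (\<Sum>i\<in>UNIV. \<Sum>l\<in>UNIV. d $ i * d $ l * cov g i l p)" for s
      using log_path_pos[of \<phi> \<psi> t, THEN less_imp_neq, symmetric] unfolding p_def[symmetric]
      by (simp add: inner_vec_def mean_jacobian_def matrix_vector_mult_def sum_distrib_left
          algebra_simps)
    ultimately have "(h has_real_derivative (\<Sum>i\<in>UNIV. \<Sum>l\<in>UNIV. d $ i * d $ l * cov g i l p)) (at t)"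
      by (simp add: has_field_derivative_def mult_commute_abs)
    then show "\<exists>y. (h has_real_derivative y) (at t) \<and> 0 < y"
      using cov_quadratic_form_pos[OF p \<open>d \<noteq> 0\<close>] by blast
  qed simp
  moreover have "h 0 = h 1"
    using eq by (simp add: h_def log_path_0[OF \<phi>_pos] log_path_1[OF \<psi>_pos])
  ultimately show False by simp
qed

lemma continuous_on_mean: "continuous_on fug_interior (mean g)"
  by (rule continuous_at_imp_continuous_on) (use has_derivative_mean has_derivative_continuous in blast)

lemma open_dens_dom: "open (dens_dom g)"
  unfolding dens_dom_def by (rule invariance_of_domain[OF continuous_on_mean open_interior mean_inj_on])

lemma gtilde_in_fug_interior_and_mean:
  assumes "a \<in> dens_dom g"
  shows "gtilde g a \<in> fug_interior" and "mean g (gtilde g a) = a"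
proof -
  have "\<exists>\<phi>. \<phi> \<in> fug_interior \<and> mean g \<phi> = a" using assms by (auto simp: dens_dom_def)
  then have "gtilde g a \<in> fug_interior \<and> mean g (gtilde g a) = a"
    unfolding gtilde_def by (rule someI_ex)
  then show "gtilde g a \<in> fug_interior" and "mean g (gtilde g a) = a" by simp_all
qed

lemma gtilde_mean: "\<phi> \<in> fug_interior \<Longrightarrow> gtilde g (mean g \<phi>) = \<phi>"
  using gtilde_in_fug_interior_and_mean[of "mean g \<phi>"] mean_inj_on
  by (simp add: dens_dom_def inj_on_eq_iff)

lemma continuous_at_gtilde:
  assumes "a \<in> dens_dom g"
  shows "continuous (at a) (gtilde g)"
proof -
  obtain h where h: "homeomorphism fug_interior (dens_dom g) (mean g) h"
    using invariance_of_domain_homeomorphism[OF open_interior continuous_on_mean _ mean_inj_on]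
    by (auto simp: dens_dom_def)
  have "h b = gtilde g b" if b: "b \<in> dens_dom g" for b
  proof -
    obtain \<phi> where "\<phi> \<in> fug_interior" "b = mean g \<phi>" using b unfolding dens_dom_def by blast
    then show ?thesis using h gtilde_mean by (simp add: homeomorphism_def)
  qed
  then have "continuous_on (dens_dom g) (gtilde g)"
    using h continuous_on_cong by (fastforce simp: homeomorphism_def)
  then show ?thesis
    using open_dens_dom assms continuous_on_eq_continuous_at by blast
qed

lemma inj_mean_jacobian:
  assumes \<phi>: "\<phi> \<in> fug_interior"
  shows "inj ((*v) (mean_jacobian g \<phi>))"
proof -
  have nonzero: "\<phi> $ m \<noteq> 0" for m using interior_fug_domD(1)[OF \<phi>] by (metis less_irrefl)
  have "h = 0" if h: "mean_jacobian g \<phi> *v h = 0" for h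
  proof (rule ccontr)
    assume "h \<noteq> 0"
    define w where "w = (\<chi> m. h $ m / \<phi> $ m)"
    have "w \<noteq> 0"
      using \<open>h \<noteq> 0\<close> nonzero by (auto simp: w_def vec_eq_iff)
    have "(\<Sum>l\<in>UNIV. w $ l * cov g i l \<phi>) = 0" for i
      using h by (auto simp: w_def mean_jacobian_def matrix_vector_mult_def vec_eq_iff ac_simps)
    then have "(\<Sum>i\<in>UNIV. \<Sum>l\<in>UNIV. w $ i * w $ l * cov g i l \<phi>) = 0"
      by (simp add: mult.assoc sum_distrib_left[symmetric])
    then show False using cov_quadratic_form_pos[OF \<phi> \<open>w \<noteq> 0\<close>] by simp
  qed
  then show ?thesis
    using linear_injective_0[OF matrix_vector_mul_linear] by blast
qed

lemma has_derivative_gtilde: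
  assumes a: "a \<in> dens_dom g"
  shows "(gtilde g has_derivative inv_into UNIV ((*v) (mean_jacobian g (gtilde g a)))) (at a)"
proof (rule has_derivative_inverse_basic)
  note x = gtilde_in_fug_interior_and_mean[OF a]
  show "(mean g has_derivative (*v) (mean_jacobian g (gtilde g a))) (at (gtilde g a))"
    by (rule has_derivative_mean[OF x(1)])
  show "bounded_linear (inv_into UNIV ((*v) (mean_jacobian g (gtilde g a))))"
    by (rule inj_linear_imp_inv_bounded_linear[OF matrix_vector_mul_bounded_linear inj_mean_jacobian[OF x(1)]])
  show "inv_into UNIV ((*v) (mean_jacobian g (gtilde g a))) \<circ> (*v) (mean_jacobian g (gtilde g a)) = id"
    by (rule inv_o_cancel[OF inj_mean_jacobian[OF x(1)]])
qed (use a continuous_at_gtilde open_dens_dom gtilde_in_fug_interior_and_mean(2) in auto)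

lemma inverse_mean_jacobian_gtilde:
  assumes a: "a \<in> dens_dom g" and D: "(gtilde g has_derivative (\<lambda>z. lam *\<^sub>R z)) (at a)"
  shows "inv_into UNIV ((*v) (mean_jacobian g (gtilde g a))) = (\<lambda>z. lam *\<^sub>R z)"
    and "mean_jacobian g (gtilde g a) *v (lam *\<^sub>R z) = z"
proof -
  show inv: "inv_into UNIV ((*v) (mean_jacobian g (gtilde g a))) = (\<lambda>z. lam *\<^sub>R z)"
    by (rule has_derivative_unique[OF has_derivative_gtilde[OF a] D])
  have "surj ((*v) (mean_jacobian g (gtilde g a)))"
    using linear_injective_imp_surjective[OF matrix_vector_mul_linear]
      inj_mean_jacobian[OF gtilde_in_fug_interior_and_mean(1)[OF a]] by blast
  then show "mean_jacobian g (gtilde g a) *v (lam *\<^sub>R z) = z"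
    using surj_f_inv_f[of "(*v) (mean_jacobian g (gtilde g a))" z] by (simp add: inv)
qed

lemma cov_gtilde_eq:
  assumes a: "a \<in> dens_dom g" and "lam \<noteq> 0" and D: "(gtilde g has_derivative (\<lambda>z. lam *\<^sub>R z)) (at a)"
  defines "x \<equiv> gtilde g a"
  shows "cov g i l x = (if i = l then x $ l / lam else 0)"
proof -
  have "0 < x $ l" using interior_fug_domD(1)[OF gtilde_in_fug_interior_and_mean(1)[OF a]] by (simp add: x_def)
  have "mean_jacobian g x *v (lam *\<^sub>R axis l 1) = axis l 1"
    unfolding x_def by (rule inverse_mean_jacobian_gtilde(2)[OF a D])
  moreover have "(mean_jacobian g x *v (lam *\<^sub>R axis l 1)) $ i = cov g i l x / x $ l * lam"
    unfolding matrix_vector_mult_def mean_jacobian_def vec_lambda_beta by (rule sum_axis_scaleR)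
  ultimately have "cov g i l x / x $ l * lam = (if i = l then 1 else 0)"
    by (simp add: axis_def)
  then show ?thesis
    using \<open>lam \<noteq> 0\<close> \<open>0 < x $ l\<close> by (auto simp: field_simps split: if_splits)
qed

lemma partial_mean_jacobian:
  assumes \<phi>: "\<phi> \<in> fug_interior"
  shows "partial j (\<lambda>\<psi>. mean_jacobian g \<psi> $ i $ l) \<phi>
    = (cumulant3 g j i l \<phi> / \<phi> $ j * \<phi> $ l - (if j = l then cov g i l \<phi> else 0)) / (\<phi> $ l * \<phi> $ l)"
proof -
  have "(\<Sum>m\<in>UNIV. axis j 1 $ m * cumulant3 g m i l \<phi> / \<phi> $ m)
      = (\<Sum>m\<in>UNIV. if m = j then cumulant3 g m i l \<phi> / \<phi> $ m else 0)"
    by (intro sum.cong) (auto simp: axis_def)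
  then show ?thesis
    by (simp add: partial_eq_derivative_real[OF has_derivative_mean_jacobian_entry[OF \<phi>]] axis_def)
qed

lemma has_real_derivative_mean_jacobian_on_line:
  assumes a: "a \<in> dens_dom g" and D: "(gtilde g has_derivative (\<lambda>z. lam *\<^sub>R z)) (at a)"
  shows "((\<lambda>s. mean_jacobian g (gtilde g (a + s *\<^sub>R axis j 1)) $ i $ l) has_real_derivative
      lam * partial j (\<lambda>\<psi>. mean_jacobian g \<psi> $ i $ l) (gtilde g a)) (at 0)"
proof -
  note x = gtilde_in_fug_interior_and_mean(1)[OF a]
  obtain E where E: "((\<lambda>\<psi>. mean_jacobian g \<psi> $ i $ l) has_derivative E) (at (gtilde g a))"
    using has_derivative_mean_jacobian_entry[OF x] by blast
  have "((\<lambda>s. a + s *\<^sub>R axis j 1) has_derivative (\<lambda>s. s *\<^sub>R axis j 1)) (at 0)"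
    by (auto intro!: derivative_eq_intros)
  moreover have "(gtilde g has_derivative (\<lambda>z. lam *\<^sub>R z)) (at (a + 0 *\<^sub>R axis j 1))"
    using D by simp
  ultimately have "((\<lambda>s. gtilde g (a + s *\<^sub>R axis j 1)) has_derivative (\<lambda>s. lam *\<^sub>R s *\<^sub>R axis j 1)) (at 0)"
    by (rule has_derivative_compose)
  moreover have "((\<lambda>\<psi>. mean_jacobian g \<psi> $ i $ l) has_derivative E) (at (gtilde g (a + 0 *\<^sub>R axis j 1)))"
    using E by simp
  ultimately have "((\<lambda>s. mean_jacobian g (gtilde g (a + s *\<^sub>R axis j 1)) $ i $ l) has_derivative
      (\<lambda>s. E (lam *\<^sub>R s *\<^sub>R axis j 1))) (at 0)"
    by (rule has_derivative_compose)
  moreover have "(\<lambda>s. E (lam *\<^sub>R s *\<^sub>R axis j 1)) = (*) (lam * E (axis j 1))"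
    using linear_cmul[OF has_derivative_linear[OF E]] by (simp add: fun_eq_iff)
  ultimately show ?thesis
    by (simp add: has_field_derivative_def partial_eq_derivative_real[OF E])
qed

lemma gtilde_second_partial:
  assumes a: "a \<in> dens_dom g" and D: "(gtilde g has_derivative (\<lambda>z. lam *\<^sub>R z)) (at a)"
  shows "partial j (\<lambda>b. partial l (\<lambda>c. gtilde g c $ i) b) a
    = - (lam ^ 3) * partial j (\<lambda>\<psi>. mean_jacobian g \<psi> $ i $ l) (gtilde g a)"
proof -
  define b where "b s = a + s *\<^sub>R axis j 1" for s :: real
  define J where "J s = mean_jacobian g (gtilde g (b s))" for s
  define K where "K s = inv_into UNIV ((*v) (J s))" for s
  define u where "u = (\<chi> i. lam * (lam * partial j (\<lambda>\<psi>. mean_jacobian g \<psi> $ i $ l) (gtilde g a)))"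
  have "open (b -` dens_dom g)"
    unfolding b_def by (intro open_vimage open_dens_dom continuous_intros)
  moreover have "0 \<in> b -` dens_dom g" using a by (simp add: b_def)
  ultimately have near: "\<forall>\<^sub>F s in nhds 0. b s \<in> dens_dom g"
    by (rule eventually_nhds_in_open[of _ 0, THEN eventually_mono]) simp
  have entry: "((\<lambda>s. J s $ i' $ m) has_real_derivative
      lam * partial j (\<lambda>\<psi>. mean_jacobian g \<psi> $ i' $ m) (gtilde g a)) (at 0)" for i' m
    unfolding J_def b_def by (rule has_real_derivative_mean_jacobian_on_line[OF a D])
  have "((\<lambda>s. K s (axis l 1)) has_vector_derivative - K 0 u) (at 0)"
  proof (rule has_vector_derivative_inverse_family[where L="\<lambda>s. (*v) (J s)"])
    have K0: "K 0 = (\<lambda>z. lam *\<^sub>R z)"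
      using inverse_mean_jacobian_gtilde(1)[OF a D] by (simp add: K_def J_def b_def)
    then show "bounded_linear (K 0)" by (simp add: bounded_linear_scaleR_right)
    show "J 0 *v K 0 z = z" for z
      using inverse_mean_jacobian_gtilde(2)[OF a D] by (simp add: K0 J_def b_def)
    show "\<forall>\<^sub>F s in at 0. bounded_linear (K s) \<and> (\<forall>z. K s (J s *v z) = z)"
      using near unfolding eventually_at_filter
    proof (rule eventually_mono, intro impI)
      fix s assume "b s \<in> dens_dom g"
      then have "inj ((*v) (J s))"
        unfolding J_def by (intro inj_mean_jacobian gtilde_in_fug_interior_and_mean(1))
      then show "bounded_linear (K s) \<and> (\<forall>z. K s (J s *v z) = z)"
        unfolding K_def by (simp add: inj_linear_imp_inv_bounded_linear)
    qed
    show "bounded_linear ((*v) (J s))" for s by simp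
    have "((\<lambda>s. J s $ i' $ m) \<longlongrightarrow> J 0 $ i' $ m) (at 0)" for i' m
      using DERIV_isCont[OF entry] by (simp add: isCont_def)
    then have "(J \<longlongrightarrow> J 0) (at 0)"
      by (intro vec_tendstoI)
    then show "((\<lambda>s. onorm (\<lambda>z. J s *v z - J 0 *v z)) \<longlongrightarrow> 0) (at 0)"
      by (rule tendsto_onorm_matrix_vector_mult)
    have "J s *v K 0 (axis l 1) = (\<chi> i'. J s $ i' $ l * lam)" for s
      unfolding K0 matrix_vector_mult_def by (simp only: sum_axis_scaleR)
    moreover have "((\<lambda>s. \<chi> i'. J s $ i' $ l * lam) has_vector_derivative u) (at 0)"
      unfolding has_vector_derivative_def
    proof (rule has_derivative_vec_lambda)
      fix i'
      have "(\<lambda>s. (s *\<^sub>R u) $ i') = (*) (lam * partial j (\<lambda>\<psi>. mean_jacobian g \<psi> $ i' $ l) (gtilde g a) * lam)"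
        by (simp add: u_def fun_eq_iff algebra_simps)
      then show "((\<lambda>s. (\<chi> i'. J s $ i' $ l * lam) $ i') has_derivative (\<lambda>s. (s *\<^sub>R u) $ i')) (at 0)"
        using DERIV_cmult_right[OF entry, where c=lam] by (simp add: has_field_derivative_def)
    qed
    ultimately show "((\<lambda>s. J s *v K 0 (axis l 1)) has_vector_derivative u) (at 0)"
      by simp
  qed
  then have K_deriv: "((\<lambda>s. K s (axis l 1) $ i) has_real_derivative (- K 0 u) $ i) (at 0)"
    by (rule has_field_derivative_vec_nth)
  have near_eq: "\<forall>\<^sub>F s in nhds 0. partial l (\<lambda>c. gtilde g c $ i) (b s) = K s (axis l 1) $ i"
    using near by eventually_elim
      (simp add: partial_eq_derivative[OF has_derivative_gtilde] K_def J_def)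
  have derivative_value: "(- K 0 u) $ i = - (lam ^ 3) * partial j (\<lambda>\<psi>. mean_jacobian g \<psi> $ i $ l) (gtilde g a)"
    using inverse_mean_jacobian_gtilde(1)[OF a D] by (simp add: K_def J_def b_def u_def power3_eq_cube)
  have "((\<lambda>s. partial l (\<lambda>c. gtilde g c $ i) (b s)) has_real_derivative (- K 0 u) $ i) (at 0)"
    using DERIV_cong_ev[OF refl near_eq refl] K_deriv by blast
  then have "((\<lambda>s. partial l (\<lambda>c. gtilde g c $ i) (b s)) has_real_derivative
      - (lam ^ 3) * partial j (\<lambda>\<psi>. mean_jacobian g \<psi> $ i $ l) (gtilde g a)) (at 0)"
    by (simp only: derivative_value)
  then show ?thesis
    unfolding partial_def[of j] b_def by (rule DERIV_imp_deriv)
qed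

end

section \<open>Symmetry of the coupling constants\<close>

lemma coupling_constants_symmetric:
  fixes x :: "'n \<Rightarrow> real" and \<kappa> \<gamma> \<Gamma> :: "'n \<Rightarrow> 'n \<Rightarrow> 'n \<Rightarrow> real"
  assumes x: "\<And>m. 0 < x m" and "0 < lam"
    and \<kappa>: "\<And>i j l. \<kappa> i j l = \<kappa> j i l" "\<And>i j l. \<kappa> i j l = \<kappa> i l j"
    and \<gamma>: "\<And>i j l. \<gamma> i j l
      = - (lam ^ 3) * (\<kappa> i j l / (x j * x l) - (if i = j \<and> j = l then 1 / (lam * x l) else 0))"
    and \<Gamma>: "\<And>i j l. \<Gamma> i j l = c / lam powr (3/2) * (sqrt (x j) * sqrt (x l) / sqrt (x i)) * \<gamma> i j l"
  shows "\<Gamma> i j l = \<Gamma> i l j \<and> \<Gamma> i j l = \<Gamma> j i l"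
proof -
  define P where "P = lam powr (3/2)"
  have "0 < P" using \<open>0 < lam\<close> by (simp add: P_def)
  have "P * P = lam ^ 3"
    using \<open>0 < lam\<close> by (simp add: P_def powr_add[symmetric] powr_numeral)
  define q where "q m = sqrt (x m)" for m
  have q: "0 < q m" "x m = q m * q m" for m
    using x[of m] by (simp_all add: q_def)
  have normal_form: "\<Gamma> i j l = - c * P * (\<kappa> i j l / (q i * q j * q l)
      - (if i = j \<and> j = l then 1 / (lam * q i) else 0))" for i j l
    unfolding \<Gamma> \<gamma> P_def[symmetric] q_def[symmetric] q(2) \<open>P * P = lam ^ 3\<close>[symmetric]
    using q(1)[of i] q(1)[of j] q(1)[of l] \<open>0 < P\<close> \<open>0 < lam\<close>
    by (auto simp: field_simps)
  have "\<kappa> i l j = \<kappa> i j l" "\<kappa> j i l = \<kappa> i j l" using \<kappa> by metis+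
  then show ?thesis
    unfolding normal_form by (auto simp: ac_simps)
qed

theorem proposition6p1:
  fixes g :: "'n::finite \<Rightarrow> nat^'n \<Rightarrow> real"
    and a0 :: "real^'n" and lam c :: real
  assumes nonneg: "\<forall>i k. g i k \<ge> 0"
    and ND: "cond_ND g" and INV: "cond_INV g" and ORI: "cond_ORI g"
    and a0_pos: "\<forall>i. a0 $ i > 0"
    and a0_int: "a0 \<in> interior (dens_dom g)"
    and FC_diag: "\<forall>i. partial i (\<lambda>a. gtilde g a $ i) a0 = lam"
    and FC_off: "\<forall>i j. i \<noteq> j \<longrightarrow> partial j (\<lambda>a. gtilde g a $ i) a0 = 0"
    and lam_pos: "lam > 0"
  defines "\<gamma> \<equiv> (\<lambda>i j l. partial j (\<lambda>b. partial l (\<lambda>a. gtilde g a $ i) b) a0)"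
    and "q \<equiv> (\<lambda>i. sqrt (gtilde g a0 $ i))"
  defines "\<Gamma> \<equiv> (\<lambda>i j l. c / lam powr (3/2) * (q j * q l / q i) * \<gamma> i j l)"
  shows "\<forall>i j l. \<Gamma> i j l = \<Gamma> i l j \<and> \<Gamma> i j l = \<Gamma> j i l"
proof -
  interpret zero_range g using nonneg ND by unfold_locales auto
  have a0: "a0 \<in> dens_dom g" using a0_int interior_subset by blast
  have D: "(gtilde g has_derivative (\<lambda>z. lam *\<^sub>R z)) (at a0)"
    using FC_diag FC_off by (intro has_derivative_scaleR_of_partials[OF has_derivative_gtilde[OF a0]]) auto
  define x where "x = gtilde g a0"
  have x: "x \<in> fug_interior" and x_pos: "\<And>m. 0 < x $ m"
    using gtilde_in_fug_interior_and_mean(1)[OF a0] interior_fug_domD(1) by (auto simp: x_def)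
  have \<gamma>_eq: "\<gamma> i j l = - (lam ^ 3) * (cumulant3 g j i l x / (x $ j * x $ l)
      - (if i = j \<and> j = l then 1 / (lam * x $ l) else 0))" for i j l
  proof -
    have "\<gamma> i j l = - (lam ^ 3) * partial j (\<lambda>\<psi>. mean_jacobian g \<psi> $ i $ l) x"
      unfolding \<gamma>_def x_def by (rule gtilde_second_partial[OF a0 D])
    also have "partial j (\<lambda>\<psi>. mean_jacobian g \<psi> $ i $ l) x
        = (cumulant3 g j i l x / x $ j * x $ l - (if i = j \<and> j = l then x $ l / lam else 0))
          / (x $ l * x $ l)"
    proof -
      have "cov g i l x = (if i = l then x $ l / lam else 0)"
        unfolding x_def by (rule cov_gtilde_eq[OF a0 _ D]) (use lam_pos in simp)
      then show ?thesis
        by (cases "j = l"; cases "i = l") (simp_all add: partial_mean_jacobian[OF x])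
    qed
    also have "\<dots> = cumulant3 g j i l x / (x $ j * x $ l) - (if i = j \<and> j = l then 1 / (lam * x $ l) else 0)"
      using x_pos[of j] x_pos[of l] lam_pos by (simp add: field_simps)
    finally show ?thesis .
  qed
  have \<Gamma>_eq: "\<Gamma> i j l = c / lam powr (3/2) * (sqrt (x $ j) * sqrt (x $ l) / sqrt (x $ i)) * \<gamma> i j l"
    for i j l
    by (simp add: \<Gamma>_def q_def x_def)
  have "cumulant3 g j i l x = cumulant3 g i j l x" "cumulant3 g j i l x = cumulant3 g l i j x" for i j l
    using cumulant3_commute by metis+
  then show ?thesis
    using coupling_constants_symmetric[OF x_pos lam_pos _ _ \<gamma>_eq \<Gamma>_eq] by blast
qed

end
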